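(* Let $(M,\varphi,g)$ be an anti-paraKähler manifold of dimension $2k\ge 2$, and let $g_{BS}$ be the Berger type deformed Sasaki metric on $TM$ with constant $\delta\neq0$, and $g_S$ the Sasaki metric on $TM$. Then the identity map $I:(TM,g_{BS})\to(TM,g_S)$ is not totally geodesic, and it is not harmonic (i.e. $g_S$ is not harmonic with respect to $g_{BS}$: its tension field $\tau_{g_{BS}}(I)=\mathrm{trace}_{g_{BS}}\big({}^{S}\nabla-{}^{BS}\nabla\big)$ does not vanish identically).
   Context: An anti-paraKähler manifold $(M,\varphi,g)$ of dimension $2k$ consists of a Riemannian metric $g$ and a $(1,1)$-tensor field $\varphi$ with $\varphi^2=\mathrm{id}$ whose $(+1)$- and $(-1)$-eigenbundles both have rank $k$, such that $g(\varphi X,Y)=g(X,\varphi Y)$ for all vector fields $X,Y$ and $\nabla\varphi=0$, where $\nabla$ is the Levi-Civita connection of $g$. Let $\pi:TM\to M$ be the tangent bundle; points of $TM$ are denoted $u$. For a vector field $X$ on $M$, $X^H$ denotes its horizontal lift to $TM$ with respect to $\nabla$ and $X^V$ its vertical lift. For a constant $\delta$, the Berger type deformed Sasaki metric $g_{BS}$ on $TM$ is the Riemannian metric defined at $u\in TM$ by $g_{BS}(X^H,Y^H)=g(X,Y)$, $g_{BS}(X^H,Y^V)=g_{BS}(X^V,Y^H)=0$, $g_{BS}(X^V,Y^V)=g(X,Y)+\delta^2 g(X,\varphi u)\,g(Y,\varphi u)$ (all evaluated at $\pi(u)$). The Sasaki metric $g_S$ is the same expression with $\delta=0$. ${}^{BS}\nabla$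 and ${}^{S}\nabla$ denote the Levi-Civita connections of $g_{BS}$ and $g_S$. For the identity map $I:(TM,g_{BS})\to(TM,g_S)$ the second fundamental form is $\beta(I)={}^{S}\nabla-{}^{BS}\nabla$; $I$ is totally geodesic if $\beta(I)=0$ and harmonic if $\mathrm{trace}_{g_{BS}}\beta(I)=0$. *)

theory Defs
  imports "HOL-Analysis.Analysis"
begin

text \<open>Everything is done in a coordinate chart: the manifold M is (a chart domain) U, an open
subset of real^'n; the tangent bundle TM over U has coordinates (x,u) encoded as a vector
z in real^('n + 'n), with x = z restricted to Inl, u = z restricted to Inr.\<close>

definition pd :: "(real^'m \<Rightarrow> real) \<Rightarrow> 'm \<Rightarrow> real^'m \<Rightarrow> real" where
  "pd f i z = deriv (\<lambda>t. f (z + t *\<^sub>R axis i 1)) 0"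

fun ipd :: "(real^'m \<Rightarrow> real) \<Rightarrow> 'm list \<Rightarrow> real^'m \<Rightarrow> real" where
  "ipd f [] = f"
| "ipd f (i # is) = pd (ipd f is) i"

definition smooth_on :: "(real^'m) set \<Rightarrow> (real^'m \<Rightarrow> real) \<Rightarrow> bool" where
  "smooth_on U f \<longleftrightarrow> (\<forall>is. continuous_on U (ipd f is) \<and>
      (\<forall>z\<in>U. \<forall>i. (\<lambda>t. ipd f is (z + t *\<^sub>R axis i 1)) differentiable (at 0)))"

definition christoffel :: "(real^'m \<Rightarrow> real^'m^'m) \<Rightarrow> real^'m \<Rightarrow> 'm \<Rightarrow> 'm \<Rightarrow> 'm \<Rightarrow> real" where
  "christoffel G z c a b = (1/2) * (\<Sum>l\<in>UNIV. matrix_inv (G z) $ c $ l *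
      (pd (\<lambda>w. G w $ b $ l) a z + pd (\<lambda>w. G w $ a $ l) b z - pd (\<lambda>w. G w $ a $ b) l z))"

definition gform :: "(real^'n \<Rightarrow> real^'n^'n) \<Rightarrow> real^'n \<Rightarrow> real^'n \<Rightarrow> real^'n \<Rightarrow> real" where
  "gform g x v w = v \<bullet> (g x *v w)"

text \<open>Components (nabla_{d_a} phi)^i_j of the covariant derivative of the (1,1)-tensor phi,
where phi x $ i $ j = phi^i_j.\<close>
definition nabla_phi :: "(real^'n \<Rightarrow> real^'n^'n) \<Rightarrow> (real^'n \<Rightarrow> real^'n^'n) \<Rightarrow> real^'n
    \<Rightarrow> 'n \<Rightarrow> 'n \<Rightarrow> 'n \<Rightarrow> real" where
  "nabla_phi g \<phi> x a i j = pd (\<lambda>y. \<phi> y $ i $ j) a x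
     + (\<Sum>l\<in>UNIV. christoffel g x i a l * \<phi> x $ l $ j)
     - (\<Sum>l\<in>UNIV. christoffel g x l a j * \<phi> x $ i $ l)"

definition xpart :: "real^('n + 'n) \<Rightarrow> real^'n" where
  "xpart z = (\<chi> i. z $ Inl i)"

definition upart :: "real^('n + 'n) \<Rightarrow> real^'n" where
  "upart z = (\<chi> i. z $ Inr i)"

definition TM_dom :: "(real^'n) set \<Rightarrow> (real^('n + 'n)) set" where
  "TM_dom U = {z. xpart z \<in> U}"

text \<open>Coordinate matrix of the Berger type deformed Sasaki metric g_BS at z = (x,u), in the
coordinate frame (d_{x^i}, d_{u^i}). With horizontal lifts H_i = d_{x^i} - N_i^k d_{u^k},
N_i^k = u^j Gamma^k_{ij}, and vertical lifts V_i = d_{u^i}, the defining conditions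
g_BS(H_i,H_j) = g_ij, g_BS(H_i,V_j) = 0, g_BS(V_i,V_j) = h_ij with
h_ij = g_ij + delta^2 g(d_i, phi u) g(d_j, phi u) are equivalent to the formula below.\<close>
definition berger_metric :: "(real^'n \<Rightarrow> real^'n^'n) \<Rightarrow> (real^'n \<Rightarrow> real^'n^'n) \<Rightarrow> real
    \<Rightarrow> real^('n + 'n) \<Rightarrow> real^('n + 'n)^('n + 'n)" where
  "berger_metric g \<phi> \<delta> z =
    (let x = xpart z; u = upart z;
         N = (\<lambda>i k. \<Sum>j\<in>UNIV. u $ j * christoffel g x k i j);
         w = (\<lambda>i. gform g x (axis i 1) (\<phi> x *v u));
         h = (\<lambda>i j. g x $ i $ j + \<delta>^2 * w i * w j)
     in (\<chi> a b. case (a, b) of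
            (Inl i, Inl j) \<Rightarrow> g x $ i $ j + (\<Sum>k\<in>UNIV. \<Sum>l\<in>UNIV. N i k * N j l * h k l)
          | (Inl i, Inr j) \<Rightarrow> (\<Sum>k\<in>UNIV. N i k * h k j)
          | (Inr i, Inl j) \<Rightarrow> (\<Sum>k\<in>UNIV. N j k * h i k)
          | (Inr i, Inr j) \<Rightarrow> h i j))"

definition sasaki_metric :: "(real^'n \<Rightarrow> real^'n^'n) \<Rightarrow> (real^'n \<Rightarrow> real^'n^'n)
    \<Rightarrow> real^('n + 'n) \<Rightarrow> real^('n + 'n)^('n + 'n)" where
  "sasaki_metric g \<phi> = berger_metric g \<phi> 0"

text \<open>Components of the second fundamental form beta(I) = nabla^{G2} - nabla^{G1} of the
identity map I : (D, G1) -> (D, G2): beta(d_a, d_b) = sum_c beta_comp c a b d_c.\<close>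
definition beta_comp :: "(real^'m \<Rightarrow> real^'m^'m) \<Rightarrow> (real^'m \<Rightarrow> real^'m^'m)
    \<Rightarrow> real^'m \<Rightarrow> 'm \<Rightarrow> 'm \<Rightarrow> 'm \<Rightarrow> real" where
  "beta_comp G1 G2 z c a b = christoffel G2 z c a b - christoffel G1 z c a b"

definition totally_geodesic_id :: "(real^'m) set \<Rightarrow> (real^'m \<Rightarrow> real^'m^'m)
    \<Rightarrow> (real^'m \<Rightarrow> real^'m^'m) \<Rightarrow> bool" where
  "totally_geodesic_id D G1 G2 \<longleftrightarrow> (\<forall>z\<in>D. \<forall>c a b. beta_comp G1 G2 z c a b = 0)"

definition harmonic_id :: "(real^'m) set \<Rightarrow> (real^'m \<Rightarrow> real^'m^'m)
    \<Rightarrow> (real^'m \<Rightarrow> real^'m^'m) \<Rightarrow> bool" where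
  "harmonic_id D G1 G2 \<longleftrightarrow> (\<forall>z\<in>D. \<forall>c.
      (\<Sum>a\<in>UNIV. \<Sum>b\<in>UNIV. matrix_inv (G1 z) $ a $ b * beta_comp G1 G2 z c a b) = 0)"

end

theory Submission
  imports Defs
begin

text \<open>In coordinates \<open>g\<^sub>B\<^sub>S = g\<^sub>S + \<delta>\<^sup>2 \<theta> \<theta>\<^sup>T\<close>, where \<open>\<theta> = g\<^sub>S \<zeta>\<close> is dual to the vertical
  lift \<open>\<zeta>\<close> of \<open>\<phi> u\<close>. Inverting this rank-one update (Sherman-Morrison) and using \<open>\<nabla>\<phi> = 0\<close>,
  which kills the components \<open>d\<theta>(\<zeta>, \<cdot>)\<close>, the vertical component of the tension field at \<open>(x, u)\<close>
  becomes \<open>c \<psi>\<^sub>m (c g(\<psi>, \<phi> \<psi>) - tr \<phi>)\<close> with \<open>\<psi> = \<phi> u\<close> and \<open>c = \<delta>\<^sup>2 / (1 + \<delta>\<^sup>2 g(\<psi>, \<psi>))\<close>.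
  On the line \<open>u = t u\<^sub>0\<close> through an eigenvector \<open>\<phi> u\<^sub>0 = \<plusminus>u\<^sub>0\<close> the bracket is
  \<open>\<plusminus>h(t) - tr \<phi>\<close> with \<open>h(t) = \<delta>\<^sup>2 t\<^sup>2 q / (1 + \<delta>\<^sup>2 t\<^sup>2 q)\<close> strictly increasing in \<open>t\<^sup>2\<close>, so the
  tension field cannot vanish: the identity is not harmonic, a fortiori not totally geodesic.\<close>

section \<open>Matrix algebra\<close>

lemma sum_UNIV_Plus:
  "(\<Sum>a\<in>(UNIV::('a::finite + 'b::finite) set). f a) = (\<Sum>i\<in>UNIV. f (Inl i)) + (\<Sum>j\<in>UNIV. f (Inr j))"
  by (subst UNIV_Plus_UNIV[symmetric], subst sum.Plus) (simp_all add: comp_def)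

lemma sum_rotate3: "(\<Sum>a\<in>UNIV. \<Sum>b\<in>UNIV. \<Sum>c\<in>UNIV. F a b c) = (\<Sum>b\<in>UNIV. \<Sum>c\<in>UNIV. \<Sum>a\<in>UNIV. (F a b c::real))"
proof -
  have "(\<Sum>a\<in>UNIV. \<Sum>b\<in>UNIV. \<Sum>c\<in>UNIV. F a b c) = (\<Sum>b\<in>UNIV. \<Sum>a\<in>UNIV. \<Sum>c\<in>UNIV. F a b c)"
    by (rule sum.swap)
  also have "\<dots> = (\<Sum>b\<in>UNIV. \<Sum>c\<in>UNIV. \<Sum>a\<in>UNIV. F a b c)"
    by (rule sum.cong[OF refl], rule sum.swap)
  finally show ?thesis .
qed

lemma sum_axis: "(\<Sum>i\<in>UNIV. axis j (1::real) $ i * c i) = c j"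
proof -
  have "(\<Sum>i\<in>UNIV. axis j (1::real) $ i * c i) = (\<Sum>i\<in>UNIV. if i = j then c i else 0)"
    by (rule sum.cong) (auto simp: axis_def)
  then show ?thesis by simp
qed

lemma sum_axis': "(\<Sum>i\<in>UNIV. c i * axis j (1::real) $ i) = c j"
  using sum_axis[of j c] by (simp add: mult.commute)

definition block_mat :: "'a::zero^'n^'n \<Rightarrow> 'a^'n^'n \<Rightarrow> 'a^'n^'n \<Rightarrow> 'a^'n^'n \<Rightarrow> 'a^('n+'n)^('n+'n)" where
  "block_mat A B C D = (\<chi> a b. case a of Inl i \<Rightarrow> (case b of Inl j \<Rightarrow> A$i$j | Inr j \<Rightarrow> B$i$j)
                                 | Inr i \<Rightarrow> (case b of Inl j \<Rightarrow> C$i$j | Inr j \<Rightarrow> D$i$j))"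

definition pair_vec :: "'a^'n \<Rightarrow> 'a^'n \<Rightarrow> 'a^('n+'n)" where
  "pair_vec x y = (\<chi> a. case a of Inl i \<Rightarrow> x$i | Inr i \<Rightarrow> y$i)"

lemma block_mat_nth[simp]:
  "block_mat A B C D $ Inl i $ Inl j = A$i$j" "block_mat A B C D $ Inl i $ Inr j = B$i$j"
  "block_mat A B C D $ Inr i $ Inl j = C$i$j" "block_mat A B C D $ Inr i $ Inr j = D$i$j"
  by (simp_all add: block_mat_def)

lemma pair_vec_nth[simp]: "pair_vec x y $ Inl i = x$i" "pair_vec x y $ Inr i = y$i"
  by (simp_all add: pair_vec_def)

lemma inner_pair_vec: "pair_vec a b \<bullet> pair_vec c d = a \<bullet> c + b \<bullet> (d :: real^'n)"
  by (simp add: inner_vec_def sum_UNIV_Plus)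

lemma block_mat_mult:
  fixes A :: "'a::semiring_1^'n^'n"
  shows "block_mat A B C D ** block_mat E F G H = block_mat (A**E + B**G) (A**F + B**H) (C**E + D**G) (C**F + D**H)"
  by (simp add: vec_eq_iff, intro allI, rename_tac a b, case_tac a; case_tac b;
      simp add: matrix_matrix_mult_def sum_UNIV_Plus)

lemma block_mat_mv:
  fixes A :: "'a::semiring_1^'n^'n"
  shows "block_mat A B C D *v pair_vec x y = pair_vec (A *v x + B *v y) (C *v x + D *v y)"
  by (simp add: vec_eq_iff, intro allI, rename_tac a, case_tac a;
      simp add: matrix_vector_mult_def sum_UNIV_Plus)

lemma mat1_eq_block_mat: "(mat 1 :: 'a::semiring_1^('n::finite+'n)^('n+'n)) = block_mat (mat 1) 0 0 (mat 1)"
  by (simp add: vec_eq_iff, intro allI, rename_tac a b, case_tac a; case_tac b; simp add: mat_def)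

lemma transpose_block_mat: "transpose (block_mat A B C D) = block_mat (transpose A) (transpose C) (transpose B) (transpose D)"
  by (simp add: vec_eq_iff, intro allI, rename_tac a b, case_tac a; case_tac b; simp add: transpose_def)

lemma block_mat_add: "block_mat A B C D + block_mat A' B' C' D' = block_mat (A+A') (B+B') (C+C') (D+D')"
  by (simp add: vec_eq_iff, intro allI, rename_tac a b, case_tac a; case_tac b; simp)

lemma block_mat_scaleR: "r *\<^sub>R block_mat A B C D = block_mat (r *\<^sub>R A) (r *\<^sub>R B) (r *\<^sub>R C) (r *\<^sub>R D)"
  by (simp add: vec_eq_iff, intro allI, rename_tac a b, case_tac a; case_tac b; simp)

definition outer :: "'a::times^'n \<Rightarrow> 'a^'m \<Rightarrow> 'a^'m^'n" where
  "outer a b = (\<chi> i j. a$i * b$j)"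

lemma outer_nth[simp]: "outer a b $ i $ j = a$i * b$j" by (simp add: outer_def)

lemma outer_pair_vec: "outer (pair_vec a b) (pair_vec c d) = block_mat (outer a c) (outer a d) (outer b c) (outer b d)"
  by (simp add: vec_eq_iff, intro allI, rename_tac i j, case_tac i; case_tac j; simp)

lemma mult_outer: "(M::'a::comm_semiring_1^'n^'m) ** outer a b = outer (M *v a) b"
  by (simp add: vec_eq_iff matrix_matrix_mult_def matrix_vector_mult_def sum_distrib_right mult.assoc)

lemma outer_mult: "outer a b ** (M::'a::comm_semiring_1^'p^'n) = outer a (transpose M *v b)"
  by (simp add: vec_eq_iff matrix_matrix_mult_def matrix_vector_mult_def sum_distrib_left mult_ac transpose_def)

lemma outer_mult_vector: "outer a b *v v = (b \<bullet> v) *\<^sub>R (a :: real^'n)"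
  by (simp add: vec_eq_iff matrix_vector_mult_def inner_vec_def sum_distrib_left mult_ac)

lemma outer_scaleR_left: "outer (r *\<^sub>R a) b = r *\<^sub>R outer a (b::real^'m)"
  by (simp add: vec_eq_iff)

lemma outer_scaleR_right: "outer a (r *\<^sub>R b) = r *\<^sub>R outer (a::real^'m) (b::real^'p)"
  by (simp add: vec_eq_iff)

lemma transpose_outer: "transpose (outer (a::'a::comm_semiring_1^'n) b) = outer b a"
  unfolding vec_eq_iff transpose_def by (auto simp: mult.commute)

lemma matrix_add_rdistrib: "((B + C) ** A) = (B ** A) + (C ** A)"
  by (vector matrix_matrix_mult_def sum.distrib[symmetric] field_simps)

lemma matrix_neg_left: "(- A :: 'a::ring_1^'n^'m) ** B = - (A ** B)"
  by (vector matrix_matrix_mult_def sum_negf)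

lemma matrix_neg_right: "(A :: 'a::ring_1^'n^'m) ** (- B) = - (A ** B)"
  by (vector matrix_matrix_mult_def sum_negf)

lemma matrix_diff_ldistrib: "(A :: 'a::ring_1^'n^'m) ** (B - C) = A ** B - A ** C"
  by (vector matrix_matrix_mult_def sum_subtractf right_diff_distrib)

lemma transpose_add: "transpose (A + B) = transpose A + transpose B"
  by (simp add: vec_eq_iff transpose_def)

lemma transpose_minus: "transpose (A - B) = transpose A - transpose (B::real^'n^'m)"
  by (simp add: vec_eq_iff transpose_def)

lemma symmetric_matrix_nth: "transpose A = A \<Longrightarrow> A $ i $ j = A $ j $ i"
  by (metis transpose_def vec_lambda_beta)

lemma sum_swap_symmetric:
  fixes M :: "real^'m^'m"
  assumes "transpose M = M"
  shows "(\<Sum>a\<in>UNIV. \<Sum>b\<in>UNIV. M$a$b * F b a) = (\<Sum>a\<in>UNIV. \<Sum>b\<in>UNIV. M$a$b * F a b)"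
proof -
  have s: "M$b$a = M$a$b" for a b using symmetric_matrix_nth[OF assms] .
  have "(\<Sum>a\<in>UNIV. \<Sum>b\<in>UNIV. M$a$b * F b a) = (\<Sum>b\<in>UNIV. \<Sum>a\<in>UNIV. M$a$b * F b a)"
    by (rule sum.swap)
  also have "\<dots> = (\<Sum>b\<in>UNIV. \<Sum>a\<in>UNIV. M$b$a * F b a)" by (simp add: s)
  finally show ?thesis .
qed

lemma selfadjoint_imp_symmetric_mult:
  fixes G P :: "real^'n^'n"
  assumes "transpose G = G" "\<forall>v w. v \<bullet> (G *v (P *v w)) = (P *v v) \<bullet> (G *v w)"
  shows "transpose (G ** P) = G ** P"
proof -
  have "(G ** P) $ i $ j = (G ** P) $ j $ i" for i j
  proof -
    have "(P *v axis j 1) \<bullet> (G *v axis i 1) = axis j 1 \<bullet> (G *v (P *v axis i 1))"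
      using assms(2) by metis
    moreover have "(P *v axis j 1) \<bullet> (G *v axis i 1) = (G ** P) $ i $ j"
      unfolding inner_vec_def matrix_vector_mult_def matrix_matrix_mult_def
      by (simp add: axis_def if_distrib if_distribR sum.delta' symmetric_matrix_nth[OF assms(1)] mult.commute
          cong: if_cong)
    moreover have "axis j 1 \<bullet> (G *v (P *v axis i 1)) = (G ** P) $ j $ i"
      unfolding inner_vec_def matrix_vector_mult_def matrix_matrix_mult_def
      by (simp add: axis_def if_distrib if_distribR sum.delta' cong: if_cong)
    ultimately show ?thesis by simp
  qed
  then show ?thesis by (simp add: vec_eq_iff transpose_def)
qed

definition frob_pairing :: "real^'n^'m \<Rightarrow> real^'n^'m \<Rightarrow> real" where
  "frob_pairing A B = (\<Sum>i\<in>UNIV. \<Sum>j\<in>UNIV. A$i$j * B$i$j)"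

lemma frob_mult_right: "frob_pairing A (B ** C) = frob_pairing (A ** transpose C) B"
proof -
  have "frob_pairing A (B ** C) = (\<Sum>i\<in>UNIV. \<Sum>j\<in>UNIV. \<Sum>k\<in>UNIV. A$i$j * B$i$k * C$k$j)"
    unfolding frob_pairing_def matrix_matrix_mult_def by (simp add: sum_distrib_left mult_ac)
  also have "\<dots> = (\<Sum>i\<in>UNIV. \<Sum>k\<in>UNIV. \<Sum>j\<in>UNIV. A$i$j * B$i$k * C$k$j)"
    by (rule sum.cong[OF refl], rule sum.swap)
  also have "\<dots> = frob_pairing (A ** transpose C) B"
    unfolding frob_pairing_def matrix_matrix_mult_def transpose_def by (simp add: sum_distrib_right sum_distrib_left mult_ac)
  finally show ?thesis .
qed

lemma frob_mult_left: "frob_pairing A (B ** C) = frob_pairing (transpose B ** A) C"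
proof -
  have "frob_pairing A (B ** C) = (\<Sum>i\<in>UNIV. \<Sum>j\<in>UNIV. \<Sum>k\<in>UNIV. A$i$j * B$i$k * C$k$j)"
    unfolding frob_pairing_def matrix_matrix_mult_def by (simp add: sum_distrib_left mult_ac)
  also have "\<dots> = (\<Sum>i\<in>UNIV. \<Sum>k\<in>UNIV. \<Sum>j\<in>UNIV. A$i$j * B$i$k * C$k$j)"
    by (rule sum.cong[OF refl], rule sum.swap)
  also have "\<dots> = (\<Sum>k\<in>UNIV. \<Sum>j\<in>UNIV. \<Sum>i\<in>UNIV. A$i$j * B$i$k * C$k$j)"
    by (rule sum_rotate3)
  also have "\<dots> = frob_pairing (transpose B ** A) C"
    unfolding frob_pairing_def matrix_matrix_mult_def transpose_def by (simp add: sum_distrib_right sum_distrib_left mult_ac)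
  finally show ?thesis .
qed

lemma matrix_inv_eqI:
  fixes A :: "'a::field^'n^'n"
  assumes "A ** B = mat 1" "B ** A = mat 1"
  shows "matrix_inv A = B"
proof -
  have ex: "\<exists>B'. A ** B' = mat 1 \<and> B' ** A = mat 1" using assms by blast
  have "A ** matrix_inv A = mat 1 \<and> matrix_inv A ** A = mat 1"
    unfolding matrix_inv_def by (rule someI_ex[OF ex])
  then have "matrix_inv A = (B ** A) ** matrix_inv A" using assms by simp
  also have "\<dots> = B" by (metis \<open>_ \<and> _\<close> matrix_mul_assoc matrix_mul_rid)
  finally show ?thesis .
qed

lemma matrix_inv_props:
  fixes A :: "'a::field^'n^'n"
  assumes "invertible A"
  shows "A ** matrix_inv A = mat 1" "matrix_inv A ** A = mat 1"
proof -
  have ex: "\<exists>B'. A ** B' = mat 1 \<and> B' ** A = mat 1" using assms unfolding invertible_def by blast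
  show "A ** matrix_inv A = mat 1" "matrix_inv A ** A = mat 1"
    using someI_ex[OF ex] unfolding matrix_inv_def by auto
qed

lemma matrix_inv_symmetric:
  fixes A :: "real^'n^'n"
  assumes "transpose A = A" "invertible A"
  shows "transpose (matrix_inv A) = matrix_inv A"
proof -
  have "A ** transpose (matrix_inv A) = mat 1"
    by (metis assms matrix_inv_props(2) matrix_transpose_mul transpose_mat)
  then have "matrix_inv A = transpose (matrix_inv A)"
    using matrix_inv_eqI matrix_left_right_inverse by blast
  then show ?thesis by simp
qed

lemma right_inverse_contract:
  fixes A B :: "real^'n^'n"
  assumes "A ** B = mat 1"
  shows "(\<Sum>l\<in>UNIV. A$j$l * (\<Sum>m\<in>UNIV. B$l$m * F m)) = F j"
proof -
  have "(\<Sum>l\<in>UNIV. A$j$l * (\<Sum>m\<in>UNIV. B$l$m * F m)) = (\<Sum>m\<in>UNIV. (A ** B)$j$m * F m)"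
    unfolding matrix_matrix_mult_def
    by (simp add: sum_distrib_left sum_distrib_right mult.assoc, rule sum.swap)
  also have "\<dots> = (\<Sum>m\<in>UNIV. if m = j then F m else 0)"
    unfolding assms mat_def by (rule sum.cong) auto
  also have "\<dots> = F j" by simp
  finally show ?thesis .
qed

lemma posdef_invertible:
  fixes G :: "real^'n^'n"
  assumes "\<forall>v. v \<noteq> 0 \<longrightarrow> v \<bullet> (G *v v) > 0"
  shows "invertible G"
proof -
  have "\<forall>x. G *v x = 0 \<longrightarrow> x = 0" using assms by force
  then show ?thesis using matrix_left_invertible_ker invertible_left_inverse by blast
qed

lemma sherman_morrison_right:
  fixes G M :: "real^'m^'m" and \<theta> \<zeta> :: "real^'m" and d :: real
  assumes GM: "G ** M = mat 1" and MG: "M ** G = mat 1" and M_sym: "transpose M = M"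
    and G\<zeta>: "G *v \<zeta> = \<theta>" and nz: "1 + d * (\<theta> \<bullet> \<zeta>) \<noteq> 0"
  shows "(G + d *\<^sub>R outer \<theta> \<theta>) ** (M - (d / (1 + d * (\<theta> \<bullet> \<zeta>))) *\<^sub>R outer \<zeta> \<zeta>) = mat 1"
proof -
  define c where "c = d / (1 + d * (\<theta> \<bullet> \<zeta>))"
  define X where "X = outer \<theta> \<zeta>"
  have M\<theta>: "M *v \<theta> = \<zeta>" using G\<zeta> MG by (metis matrix_vector_mul_assoc matrix_vector_mul_lid)
  have "(G + d *\<^sub>R outer \<theta> \<theta>) ** (M - c *\<^sub>R outer \<zeta> \<zeta>)
      = G ** M - c *\<^sub>R (G ** outer \<zeta> \<zeta>) + d *\<^sub>R (outer \<theta> \<theta> ** M) - (d * c) *\<^sub>R (outer \<theta> \<theta> ** outer \<zeta> \<zeta>)"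
    by (simp add: matrix_add_rdistrib matrix_diff_ldistrib matrix_scalar_ac scalar_matrix_assoc[symmetric]
        algebra_simps)
  also have "\<dots> = mat 1 + (d - c - d * c * (\<theta> \<bullet> \<zeta>)) *\<^sub>R X"
    unfolding GM X_def mult_outer outer_mult transpose_outer outer_mult_vector outer_scaleR_right G\<zeta> M_sym M\<theta>
    by (simp add: inner_commute outer_scaleR_left algebra_simps)
  also have "d - c - d * c * (\<theta> \<bullet> \<zeta>) = 0" using nz unfolding c_def by (simp add: field_simps)
  finally show ?thesis unfolding c_def by simp
qed

lemma matrix_inv_rank_one_update:
  fixes G :: "real^'n^'n" and \<zeta> :: "real^'n" and d :: real
  assumes "transpose G = G" "invertible G" "1 + d * ((G *v \<zeta>) \<bullet> \<zeta>) \<noteq> 0"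
  shows "matrix_inv (G + d *\<^sub>R outer (G *v \<zeta>) (G *v \<zeta>))
      = matrix_inv G - (d / (1 + d * ((G *v \<zeta>) \<bullet> \<zeta>))) *\<^sub>R outer \<zeta> \<zeta>"
    and "invertible (G + d *\<^sub>R outer (G *v \<zeta>) (G *v \<zeta>))"
proof -
  have "(G + d *\<^sub>R outer (G *v \<zeta>) (G *v \<zeta>)) ** (matrix_inv G - (d / (1 + d * ((G *v \<zeta>) \<bullet> \<zeta>))) *\<^sub>R outer \<zeta> \<zeta>)
      = mat 1"
    using assms matrix_inv_props[OF assms(2)] matrix_inv_symmetric[OF assms(1,2)]
    by (intro sherman_morrison_right) auto
  then show "matrix_inv (G + d *\<^sub>R outer (G *v \<zeta>) (G *v \<zeta>))
      = matrix_inv G - (d / (1 + d * ((G *v \<zeta>) \<bullet> \<zeta>))) *\<^sub>R outer \<zeta> \<zeta>"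
    and "invertible (G + d *\<^sub>R outer (G *v \<zeta>) (G *v \<zeta>))"
    using matrix_inv_eqI matrix_left_right_inverse invertible_def by blast+
qed

definition pd_exists :: "(real^'m \<Rightarrow> real) \<Rightarrow> real^'m \<Rightarrow> 'm \<Rightarrow> bool" where
  "pd_exists f z a \<longleftrightarrow> (\<lambda>t. f (z + t *\<^sub>R axis a 1)) differentiable (at 0)"

lemma pd_exists_DERIV: "pd_exists f z a \<Longrightarrow> DERIV (\<lambda>t. f (z + t *\<^sub>R axis a 1)) 0 :> pd f a z"
  unfolding pd_exists_def pd_def by (simp add: DERIV_deriv_iff_real_differentiable)

lemma pd_eqI: "DERIV (\<lambda>t. f (z + t *\<^sub>R axis a 1)) 0 :> D \<Longrightarrow> pd f a z = D"
  unfolding pd_def by (rule DERIV_imp_deriv)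

lemma pd_existsI: "DERIV (\<lambda>t. f (z + t *\<^sub>R axis a 1)) 0 :> D \<Longrightarrow> pd_exists f z a"
  unfolding pd_exists_def using DERIV_deriv_iff_real_differentiable DERIV_imp_deriv by metis

lemma pd_exists_mult: "pd_exists f z a \<Longrightarrow> pd_exists h z a \<Longrightarrow> pd_exists (\<lambda>w. f w * h w) z a"
  unfolding pd_exists_def by simp

lemma pd_exists_const: "pd_exists (\<lambda>w. c) z a"
  unfolding pd_exists_def by simp

lemma pd_exists_sum: "(\<And>i. i \<in> S \<Longrightarrow> pd_exists (f i) z a) \<Longrightarrow> finite S \<Longrightarrow> pd_exists (\<lambda>w. \<Sum>i\<in>S. f i w) z a"
  unfolding pd_exists_def by (rule differentiable_sum) auto

lemma pd_add: "pd_exists f z a \<Longrightarrow> pd_exists h z a \<Longrightarrow> pd (\<lambda>w. f w + h w) a z = pd f a z + pd h a z"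
  by (rule pd_eqI) (auto intro!: derivative_eq_intros pd_exists_DERIV)

lemma pd_mult: "pd_exists f z a \<Longrightarrow> pd_exists h z a \<Longrightarrow> pd (\<lambda>w. f w * h w) a z = pd f a z * h z + f z * pd h a z"
  by (rule pd_eqI) (auto intro!: derivative_eq_intros pd_exists_DERIV)

lemma pd_cmult: "pd_exists f z a \<Longrightarrow> pd (\<lambda>w. c * f w) a z = c * pd f a z"
  by (rule pd_eqI) (auto intro!: derivative_eq_intros pd_exists_DERIV)

lemma pd_sum: "(\<And>i. i \<in> S \<Longrightarrow> pd_exists (f i) z a) \<Longrightarrow> pd (\<lambda>w. \<Sum>i\<in>S. f i w) a z = (\<Sum>i\<in>S. pd (f i) a z)"
  by (rule pd_eqI) (auto intro!: derivative_eq_intros pd_exists_DERIV)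

text \<open>Everything is polynomial in the fibre coordinates, so vertical partial derivatives are
  read off as linear coefficients of quadratic polynomials.\<close>
lemma pd_quadratic_line:
  assumes "\<And>t. f (z + t *\<^sub>R axis a 1) = A + t * B + t^2 * C"
  shows "pd f a z = B" "pd_exists f z a"
proof -
  have "DERIV (\<lambda>t::real. A + t * B + t^2 * C) 0 :> B"
    by (auto intro!: derivative_eq_intros)
  then show "pd f a z = B" "pd_exists f z a"
    using assms by (simp_all add: pd_eqI pd_existsI)
qed

section \<open>Rank-one perturbations of a metric\<close>

definition christoffel_first :: "(real^'m \<Rightarrow> real^'m^'m) \<Rightarrow> real^'m \<Rightarrow> 'm \<Rightarrow> 'm \<Rightarrow> 'm \<Rightarrow> real" where
  "christoffel_first G z a b l =
    (1/2) * (pd (\<lambda>w. G w $ b $ l) a z + pd (\<lambda>w. G w $ a $ l) b z - pd (\<lambda>w. G w $ a $ b) l z)"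

lemma christoffel_eq_first:
  "christoffel G z c a b = (\<Sum>l\<in>UNIV. matrix_inv (G z) $ c $ l * christoffel_first G z a b l)"
  unfolding christoffel_def christoffel_first_def by (simp add: sum_distrib_left mult_ac)

lemma christoffel_first_outer:
  assumes "\<And>a l. pd_exists (\<lambda>w. \<theta> w $ l) z a"
  shows "christoffel_first (\<lambda>w. outer (\<theta> w) (\<theta> w)) z a b l = (1/2) *
    (\<theta> z$b * pd (\<lambda>w. \<theta> w$l) a z + pd (\<lambda>w. \<theta> w$b) a z * \<theta> z$l
     + \<theta> z$a * pd (\<lambda>w. \<theta> w$l) b z + pd (\<lambda>w. \<theta> w$a) b z * \<theta> z$l
     - \<theta> z$a * pd (\<lambda>w. \<theta> w$b) l z - pd (\<lambda>w. \<theta> w$a) l z * \<theta> z$b)"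
  unfolding christoffel_first_def by (simp add: pd_mult assms algebra_simps)

lemma christoffel_first_rank_one_update:
  assumes G1: "\<And>w. G1 w = G2 w + d *\<^sub>R outer (\<theta> w) (\<theta> w)"
    and pd_G2: "\<And>a b l. pd_exists (\<lambda>w. G2 w $ b $ l) z a"
    and pd_\<theta>: "\<And>a l. pd_exists (\<lambda>w. \<theta> w $ l) z a"
  shows "christoffel_first G1 z a b l
      = christoffel_first G2 z a b l + d * christoffel_first (\<lambda>w. outer (\<theta> w) (\<theta> w)) z a b l"
proof -
  have "pd (\<lambda>w. G1 w $ b $ l) a z = pd (\<lambda>w. G2 w $ b $ l) a z + d * pd (\<lambda>w. \<theta> w $ b * \<theta> w $ l) a z"
    for a b l
    unfolding G1 by (simp add: pd_add pd_cmult pd_G2 pd_\<theta> pd_exists_mult pd_exists_const)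
  then show ?thesis unfolding christoffel_first_def by (simp add: algebra_simps)
qed

lemma beta_comp_rank_one_update:
  assumes G1: "\<And>w. G1 w = G2 w + d *\<^sub>R outer (\<theta> w) (\<theta> w)"
    and pd_G2: "\<And>a b l. pd_exists (\<lambda>w. G2 w $ b $ l) z a"
    and pd_\<theta>: "\<And>a l. pd_exists (\<lambda>w. \<theta> w $ l) z a"
    and inv_G2: "matrix_inv (G2 z) = matrix_inv (G1 z) + c *\<^sub>R outer \<zeta> \<zeta>"
  shows "beta_comp G1 G2 z k a b
      = c * \<zeta>$k * (\<Sum>l\<in>UNIV. \<zeta>$l * christoffel_first G2 z a b l)
        - d * (\<Sum>l\<in>UNIV. matrix_inv (G1 z)$k$l * christoffel_first (\<lambda>w. outer (\<theta> w) (\<theta> w)) z a b l)"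
  unfolding beta_comp_def christoffel_eq_first inv_G2 christoffel_first_rank_one_update[OF G1 pd_G2 pd_\<theta>]
  by (simp add: algebra_simps sum.distrib sum_distrib_left sum_subtractf)

lemma trace_christoffel_first:
  fixes M :: "real^'m^'m"
  assumes "transpose M = M"
  shows "(\<Sum>a\<in>UNIV. \<Sum>b\<in>UNIV. M$a$b * (\<Sum>l\<in>UNIV. \<zeta>$l * christoffel_first G z a b l))
    = (\<Sum>a\<in>UNIV. \<Sum>b\<in>UNIV. M$a$b * (\<Sum>l\<in>UNIV. \<zeta>$l * pd (\<lambda>w. G w $ b $ l) a z))
      - (1/2) * (\<Sum>a\<in>UNIV. \<Sum>b\<in>UNIV. M$a$b * (\<Sum>l\<in>UNIV. \<zeta>$l * pd (\<lambda>w. G w $ a $ b) l z))"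
proof -
  define P where "P a b = (\<Sum>l\<in>UNIV. \<zeta>$l * pd (\<lambda>w. G w $ b $ l) a z)" for a b
  define Y where "Y a b = (\<Sum>l\<in>UNIV. \<zeta>$l * pd (\<lambda>w. G w $ a $ b) l z)" for a b
  have "(\<Sum>a\<in>UNIV. \<Sum>b\<in>UNIV. M$a$b * (\<Sum>l\<in>UNIV. \<zeta>$l * christoffel_first G z a b l))
      = (\<Sum>a\<in>UNIV. \<Sum>b\<in>UNIV. (1/2) * (M$a$b * P a b) + (1/2) * (M$a$b * P b a) - (1/2) * (M$a$b * Y a b))"
    unfolding christoffel_first_def P_def Y_def
    by (simp add: algebra_simps sum.distrib sum_subtractf sum_distrib_left)
  also have "\<dots> = (1/2) * (\<Sum>a\<in>UNIV. \<Sum>b\<in>UNIV. M$a$b * P a b) + (1/2) * (\<Sum>a\<in>UNIV. \<Sum>b\<in>UNIV. M$a$b * P b a)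
      - (1/2) * (\<Sum>a\<in>UNIV. \<Sum>b\<in>UNIV. M$a$b * Y a b)"
    by (simp add: sum.distrib sum_subtractf sum_distrib_left)
  also have "(\<Sum>a\<in>UNIV. \<Sum>b\<in>UNIV. M$a$b * P b a) = (\<Sum>a\<in>UNIV. \<Sum>b\<in>UNIV. M$a$b * P a b)"
    by (rule sum_swap_symmetric[OF assms])
  finally show ?thesis unfolding P_def Y_def by simp
qed

lemma trace_christoffel_first_outer:
  fixes M :: "real^'m^'m"
  assumes M: "transpose M = M" and M\<theta>: "M *v \<theta> z = e *\<^sub>R \<zeta>"
    and pd_\<theta>: "\<And>a l. pd_exists (\<lambda>w. \<theta> w $ l) z a"
  shows "(\<Sum>a\<in>UNIV. \<Sum>b\<in>UNIV. M$a$b * christoffel_first (\<lambda>w. outer (\<theta> w) (\<theta> w)) z a b l)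
    = e * (\<Sum>a\<in>UNIV. \<zeta>$a * (pd (\<lambda>w. \<theta> w $ l) a z - pd (\<lambda>w. \<theta> w $ a) l z))
      + \<theta> z $ l * (\<Sum>a\<in>UNIV. \<Sum>b\<in>UNIV. M$a$b * pd (\<lambda>w. \<theta> w $ b) a z)"
proof -
  define th where "th = \<theta> z"
  define Td where "Td a b = pd (\<lambda>w. \<theta> w $ b) a z" for a b
  have sw1: "(\<Sum>a\<in>UNIV. \<Sum>b\<in>UNIV. M$a$b * (th$a * Td b l)) = (\<Sum>a\<in>UNIV. \<Sum>b\<in>UNIV. M$a$b * (th$b * Td a l))"
    and sw2: "(\<Sum>a\<in>UNIV. \<Sum>b\<in>UNIV. M$a$b * (Td b a * th$l)) = (\<Sum>a\<in>UNIV. \<Sum>b\<in>UNIV. M$a$b * (Td a b * th$l))"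
    and sw3: "(\<Sum>a\<in>UNIV. \<Sum>b\<in>UNIV. M$a$b * (th$a * Td l b)) = (\<Sum>a\<in>UNIV. \<Sum>b\<in>UNIV. M$a$b * (th$b * Td l a))"
    by (rule sum_swap_symmetric[OF M])+
  have M\<theta>_nth: "(\<Sum>b\<in>UNIV. M$a$b * th$b) = e * \<zeta>$a" for a
    using M\<theta> unfolding th_def by (simp add: matrix_vector_mult_def vec_eq_iff)
  have "(\<Sum>a\<in>UNIV. \<Sum>b\<in>UNIV. M$a$b * christoffel_first (\<lambda>w. outer (\<theta> w) (\<theta> w)) z a b l)
    = (1/2) * ((\<Sum>a\<in>UNIV. \<Sum>b\<in>UNIV. M$a$b * (th$b * Td a l)) + (\<Sum>a\<in>UNIV. \<Sum>b\<in>UNIV. M$a$b * (Td a b * th$l))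
       + (\<Sum>a\<in>UNIV. \<Sum>b\<in>UNIV. M$a$b * (th$a * Td b l)) + (\<Sum>a\<in>UNIV. \<Sum>b\<in>UNIV. M$a$b * (Td b a * th$l))
       - (\<Sum>a\<in>UNIV. \<Sum>b\<in>UNIV. M$a$b * (th$a * Td l b)) - (\<Sum>a\<in>UNIV. \<Sum>b\<in>UNIV. M$a$b * (th$b * Td l a)))"
    unfolding christoffel_first_outer[OF pd_\<theta>] th_def[symmetric] Td_def[symmetric]
    by (simp add: algebra_simps sum.distrib sum_subtractf sum_distrib_left)
  also have "\<dots> = (\<Sum>a\<in>UNIV. \<Sum>b\<in>UNIV. M$a$b * (th$b * Td a l)) + (\<Sum>a\<in>UNIV. \<Sum>b\<in>UNIV. M$a$b * (Td a b * th$l))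
       - (\<Sum>a\<in>UNIV. \<Sum>b\<in>UNIV. M$a$b * (th$b * Td l a))"
    unfolding sw1 sw2 sw3 by simp
  also have "\<dots> = (\<Sum>a\<in>UNIV. (\<Sum>b\<in>UNIV. M$a$b * th$b) * (Td a l - Td l a))
      + th$l * (\<Sum>a\<in>UNIV. \<Sum>b\<in>UNIV. M$a$b * Td a b)"
    by (simp add: algebra_simps sum.distrib sum_subtractf sum_distrib_left sum_distrib_right)
  also have "\<dots> = e * (\<Sum>a\<in>UNIV. \<zeta>$a * (Td a l - Td l a)) + th$l * (\<Sum>a\<in>UNIV. \<Sum>b\<in>UNIV. M$a$b * Td a b)"
    unfolding M\<theta>_nth by (simp add: sum_distrib_left algebra_simps)
  finally show ?thesis unfolding th_def Td_def .
qed

text \<open>The trace of the second fundamental form of the identity \<open>(D, G\<^sub>1) \<rightarrow> (D, G\<^sub>2)\<close> when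
  \<open>G\<^sub>1 = G\<^sub>2 + d \<theta> \<theta>\<^sup>T\<close> with \<open>\<theta> = G\<^sub>2 f\<close>: the terms in which \<open>\<theta>\<close> is differentiated collapse to a
  derivative of \<open>f\<close> and to the curl of \<open>\<theta>\<close> contracted with \<open>f\<close>.\<close>
lemma tension_rank_one_perturbation:
  fixes G1 G2 :: "real^'m \<Rightarrow> real^'m^'m" and f :: "real^'m \<Rightarrow> real^'m"
    and z :: "real^'m" and d c e :: real and k :: 'm
  defines "\<theta> \<equiv> (\<lambda>w. G2 w *v f w)"
  assumes G1: "\<And>w. G1 w = G2 w + d *\<^sub>R outer (\<theta> w) (\<theta> w)"
    and pd_G2: "\<And>a b l. pd_exists (\<lambda>w. G2 w $ b $ l) z a"
    and pd_f: "\<And>a l. pd_exists (\<lambda>w. f w $ l) z a"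
    and M1_sym: "transpose (matrix_inv (G1 z)) = matrix_inv (G1 z)"
    and inv_G2: "matrix_inv (G2 z) = matrix_inv (G1 z) + c *\<^sub>R outer (f z) (f z)"
    and M1_\<theta>: "matrix_inv (G1 z) *v \<theta> z = e *\<^sub>R f z"
    and ce: "c = d * e"
  shows "(\<Sum>a\<in>UNIV. \<Sum>b\<in>UNIV. matrix_inv (G1 z)$a$b * beta_comp G1 G2 z k a b)
     = c * f z $ k * ( - (\<Sum>a\<in>UNIV. \<Sum>l\<in>UNIV. (matrix_inv (G1 z) ** G2 z)$a$l * pd (\<lambda>w. f w$l) a z)
          - (1/2) * (\<Sum>a\<in>UNIV. \<Sum>b\<in>UNIV. matrix_inv (G1 z)$a$b * (\<Sum>l\<in>UNIV. f z$l * pd (\<lambda>w. G2 w$a$b) l z)))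
       - c * (\<Sum>l\<in>UNIV. matrix_inv (G1 z)$k$l * (\<Sum>a\<in>UNIV. f z$a * (pd (\<lambda>w. \<theta> w$l) a z - pd (\<lambda>w. \<theta> w$a) l z)))"
proof -
  define M1 where "M1 = matrix_inv (G1 z)"
  define \<zeta> where "\<zeta> = f z"
  define Q where "Q a l = pd (\<lambda>w. f w $ l) a z" for a l
  define S where "S = (\<Sum>a\<in>UNIV. \<Sum>b\<in>UNIV. M1$a$b * pd (\<lambda>w. \<theta> w $ b) a z)"
  define E where "E l = (\<Sum>a\<in>UNIV. \<zeta>$a * (pd (\<lambda>w. \<theta> w $ l) a z - pd (\<lambda>w. \<theta> w $ a) l z))" for l
  have \<theta>_nth: "\<theta> w $ b = (\<Sum>l\<in>UNIV. G2 w $ b $ l * f w $ l)" for w b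
    unfolding \<theta>_def by (simp add: matrix_vector_mult_def)
  have pd_\<theta>: "pd_exists (\<lambda>w. \<theta> w $ b) z a" for a b
    unfolding \<theta>_nth by (intro pd_exists_sum pd_exists_mult pd_G2 pd_f) auto
  have pd_\<theta>_eq: "pd (\<lambda>w. \<theta> w $ b) a z = (\<Sum>l\<in>UNIV. pd (\<lambda>w. G2 w $ b $ l) a z * \<zeta>$l + G2 z$b$l * Q a l)"
    for a b
    unfolding \<theta>_nth Q_def \<zeta>_def
    by (subst pd_sum) (auto intro!: pd_exists_mult pd_G2 pd_f simp: pd_mult pd_G2 pd_f)
  have M1_sym': "transpose M1 = M1" using M1_sym M1_def by simp
  define A where "A = (\<Sum>a\<in>UNIV. \<Sum>b\<in>UNIV. M1$a$b * (\<Sum>l\<in>UNIV. \<zeta>$l * pd (\<lambda>w. G2 w $ b $ l) a z))"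
  define X where "X = (\<Sum>a\<in>UNIV. \<Sum>b\<in>UNIV. M1$a$b * (\<Sum>l\<in>UNIV. \<zeta>$l * pd (\<lambda>w. G2 w $ a $ b) l z))"
  define K where "K a b l = christoffel_first (\<lambda>w. outer (\<theta> w) (\<theta> w)) z a b l" for a b l
  have "(\<Sum>a\<in>UNIV. \<Sum>b\<in>UNIV. M1$a$b * beta_comp G1 G2 z k a b)
     = c * \<zeta>$k * (\<Sum>a\<in>UNIV. \<Sum>b\<in>UNIV. M1$a$b * (\<Sum>l\<in>UNIV. \<zeta>$l * christoffel_first G2 z a b l))
       - d * (\<Sum>a\<in>UNIV. \<Sum>b\<in>UNIV. \<Sum>l\<in>UNIV. M1$k$l * (M1$a$b * K a b l))"
    unfolding beta_comp_rank_one_update[OF G1 pd_G2 pd_\<theta> inv_G2] M1_def[symmetric] \<zeta>_def[symmetric] K_def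
    by (simp add: algebra_simps sum_subtractf sum_distrib_left)
  also have "(\<Sum>a\<in>UNIV. \<Sum>b\<in>UNIV. \<Sum>l\<in>UNIV. M1$k$l * (M1$a$b * K a b l))
      = (\<Sum>l\<in>UNIV. M1$k$l * (e * E l + \<theta> z $ l * S))"
    unfolding K_def S_def E_def
      trace_christoffel_first_outer[OF M1_sym' M1_\<theta>[folded M1_def \<zeta>_def] pd_\<theta>, symmetric]
    by (subst sum_rotate3, subst sum_rotate3) (simp add: sum_distrib_left)
  also have "\<dots> = e * (\<Sum>l\<in>UNIV. M1$k$l * E l) + S * (\<Sum>l\<in>UNIV. M1$k$l * \<theta> z $ l)"
    by (simp add: algebra_simps sum.distrib sum_distrib_left)
  also have "(\<Sum>l\<in>UNIV. M1$k$l * \<theta> z $ l) = e * \<zeta>$k"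
    using M1_\<theta> unfolding M1_def[symmetric] \<zeta>_def[symmetric] by (simp add: matrix_vector_mult_def vec_eq_iff)
  also have "(\<Sum>a\<in>UNIV. \<Sum>b\<in>UNIV. M1$a$b * (\<Sum>l\<in>UNIV. \<zeta>$l * christoffel_first G2 z a b l)) = A - (1/2) * X"
    unfolding A_def X_def by (rule trace_christoffel_first[OF M1_sym'])
  finally have tension: "(\<Sum>a\<in>UNIV. \<Sum>b\<in>UNIV. M1$a$b * beta_comp G1 G2 z k a b)
      = c * \<zeta>$k * (A - S - (1/2) * X) - c * (\<Sum>l\<in>UNIV. M1$k$l * E l)"
    unfolding ce by (simp add: algebra_simps)
  have "A - S = - (\<Sum>a\<in>UNIV. \<Sum>b\<in>UNIV. \<Sum>l\<in>UNIV. M1$a$b * (G2 z$b$l * Q a l))"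
    unfolding A_def S_def pd_\<theta>_eq by (simp add: algebra_simps sum.distrib sum_subtractf sum_distrib_left)
  also have "(\<Sum>a\<in>UNIV. \<Sum>b\<in>UNIV. \<Sum>l\<in>UNIV. M1$a$b * (G2 z$b$l * Q a l))
      = (\<Sum>a\<in>UNIV. \<Sum>l\<in>UNIV. (M1 ** G2 z)$a$l * Q a l)"
    unfolding matrix_matrix_mult_def
    by (simp add: sum_distrib_right mult.assoc, rule sum.cong[OF refl], rule sum.swap)
  finally show ?thesis
    unfolding M1_def[symmetric] \<zeta>_def[symmetric] tension X_def E_def Q_def by simp
qed

definition mat_curve_diff :: "(real \<Rightarrow> real^'n^'m) \<Rightarrow> bool" where
  "mat_curve_diff F \<longleftrightarrow> (\<forall>i j. (\<lambda>t. F t $ i $ j) differentiable (at 0))"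

definition vec_curve_diff :: "(real \<Rightarrow> real^'n) \<Rightarrow> bool" where
  "vec_curve_diff F \<longleftrightarrow> (\<forall>i. (\<lambda>t. F t $ i) differentiable (at 0))"

lemma differentiable_prod:
  fixes f :: "'a \<Rightarrow> real \<Rightarrow> real"
  assumes "finite S" "\<And>i. i \<in> S \<Longrightarrow> f i differentiable (at x)"
  shows "(\<lambda>t. \<Prod>i\<in>S. f i t) differentiable (at x)"
  using assms by (induction S rule: finite_induct) auto

lemma mat_curve_diff_mult: "mat_curve_diff A \<Longrightarrow> mat_curve_diff B \<Longrightarrow> mat_curve_diff (\<lambda>t. A t ** B t)"
  unfolding mat_curve_diff_def matrix_matrix_mult_def by (auto intro!: differentiable_sum)

lemma mat_curve_diff_add: "mat_curve_diff A \<Longrightarrow> mat_curve_diff B \<Longrightarrow> mat_curve_diff (\<lambda>t. A t + B t)"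
  unfolding mat_curve_diff_def by simp

lemma mat_curve_diff_transpose: "mat_curve_diff A \<Longrightarrow> mat_curve_diff (\<lambda>t. transpose (A t))"
  unfolding mat_curve_diff_def transpose_def by simp

lemma mat_curve_diff_block_mat:
  "mat_curve_diff A \<Longrightarrow> mat_curve_diff B \<Longrightarrow> mat_curve_diff C \<Longrightarrow> mat_curve_diff D
   \<Longrightarrow> mat_curve_diff (\<lambda>t. block_mat (A t) (B t) (C t) (D t))"
  unfolding mat_curve_diff_def by (intro allI, rename_tac a b, case_tac a; case_tac b; simp)

lemma vec_curve_diff_mv: "mat_curve_diff A \<Longrightarrow> vec_curve_diff v \<Longrightarrow> vec_curve_diff (\<lambda>t. A t *v v t)"
  unfolding mat_curve_diff_def vec_curve_diff_def matrix_vector_mult_def by (auto intro!: differentiable_sum)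

lemma vec_curve_diff_const: "vec_curve_diff (\<lambda>t. v)"
  unfolding vec_curve_diff_def by simp

lemma vec_curve_diff_pair_vec:
  "vec_curve_diff a \<Longrightarrow> vec_curve_diff b \<Longrightarrow> vec_curve_diff (\<lambda>t. pair_vec (a t) (b t))"
  unfolding vec_curve_diff_def by (intro allI, rename_tac i, case_tac i; simp)

lemma det_curve_diff: "mat_curve_diff A \<Longrightarrow> (\<lambda>t. det (A t)) differentiable (at 0)"
  unfolding det_def mat_curve_diff_def
  by (intro differentiable_sum differentiable_mult differentiable_prod ballI)
     (auto simp: finite_permutations)

lemma matrix_inv_cramer:
  fixes A :: "real^'n^'n"
  assumes "invertible A"
  shows "matrix_inv A $ k $ l = det (\<chi> i j. if j = k then axis l 1 $ i else A$i$j) / det A"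
proof -
  have d: "det A \<noteq> 0" using assms invertible_det_nz by blast
  have "A *v (matrix_inv A *v axis l 1) = axis l 1"
    using matrix_inv_props(1)[OF assms] by (simp add: matrix_vector_mul_assoc)
  then have "matrix_inv A *v axis l 1 = (\<chi> k. det (\<chi> i j. if j = k then axis l 1 $ i else A$i$j) / det A)"
    using cramer[OF d] by blast
  then have "(matrix_inv A *v axis l 1) $ k = det (\<chi> i j. if j = k then axis l 1 $ i else A$i$j) / det A"
    by simp
  moreover have "(matrix_inv A *v axis l 1) $ k = matrix_inv A $ k $ l"
    by (simp add: matrix_vector_mult_def axis_def if_distrib cong: if_cong)
  ultimately show ?thesis by simp
qed

lemma matrix_inv_curve_diff:
  fixes A :: "real \<Rightarrow> real^'n^'n"
  assumes "mat_curve_diff A" "0 < e" "\<And>t. \<bar>t\<bar> < e \<Longrightarrow> invertible (A t)"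
  shows "mat_curve_diff (\<lambda>t. matrix_inv (A t))"
  unfolding mat_curve_diff_def
proof (intro allI)
  fix k l
  define R where "R t = det (\<chi> i j. if j = k then axis l 1 $ i else A t$i$j) / det (A t)" for t
  have "mat_curve_diff (\<lambda>t. (\<chi> i j. if j = k then axis l 1 $ i else A t$i$j) :: real^'n^'n)"
    using assms(1) unfolding mat_curve_diff_def by (auto intro!: allI, case_tac "j = k", auto)
  then have "R differentiable (at 0)"
    unfolding R_def using assms(1) assms(3)[of 0] assms(2)
    by (intro differentiable_divide det_curve_diff) (auto simp: invertible_det_nz)
  then show "(\<lambda>t. matrix_inv (A t) $ k $ l) differentiable (at 0)"
    apply (rule differentiable_transform_within[OF _ assms(2), where s=UNIV])
    using assms(3) by (auto simp: R_def matrix_inv_cramer)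
qed

lemma open_contains_axis_line:
  fixes x :: "real^'n"
  assumes "open U" "x \<in> U"
  obtains e where "e > 0" "\<And>t. \<bar>t\<bar> < e \<Longrightarrow> x + t *\<^sub>R axis p 1 \<in> U"
proof -
  obtain e where e: "e > 0" "ball x e \<subseteq> U" using assms open_contains_ball by blast
  have "x + t *\<^sub>R axis p 1 \<in> U" if "\<bar>t\<bar> < e" for t
  proof -
    have "dist x (x + t *\<^sub>R axis p 1) = \<bar>t\<bar>" by (simp add: dist_norm)
    then show ?thesis using e that by auto
  qed
  then show ?thesis using e that by blast
qed

lemma smooth_on_line_differentiable:
  assumes "smooth_on U f" "x \<in> U"
  shows "(\<lambda>t. f (x + t *\<^sub>R axis p 1)) differentiable (at 0)"
    "(\<lambda>t. pd f i (x + t *\<^sub>R axis p 1)) differentiable (at 0)"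
proof -
  have "(\<lambda>t. ipd f [] (x + t *\<^sub>R axis p 1)) differentiable (at 0)"
    "(\<lambda>t. ipd f [i] (x + t *\<^sub>R axis p 1)) differentiable (at 0)"
    using assms unfolding smooth_on_def by blast+
  then show "(\<lambda>t. f (x + t *\<^sub>R axis p 1)) differentiable (at 0)"
    "(\<lambda>t. pd f i (x + t *\<^sub>R axis p 1)) differentiable (at 0)" by simp_all
qed

lemma smooth_on_line_DERIV:
  assumes "smooth_on U f" "x \<in> U"
  shows "DERIV (\<lambda>t. f (x + t *\<^sub>R axis p 1)) 0 :> pd f p x"
  using smooth_on_line_differentiable(1)[OF assms, of p] unfolding pd_def
  by (simp add: DERIV_deriv_iff_real_differentiable)

lemma smooth_mat_curve_diff:
  assumes "\<forall>i j. smooth_on U (\<lambda>x. g x $ i $ j)" "x \<in> U"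
  shows "mat_curve_diff (\<lambda>t. g (x + t *\<^sub>R axis p 1))"
  unfolding mat_curve_diff_def using smooth_on_line_differentiable(1)[OF _ assms(2)] assms(1) by blast

section \<open>The Sasaki and Berger metrics in coordinates\<close>

lemma xpart_add: "xpart (a + b) = xpart a + xpart b" by (simp add: xpart_def vec_eq_iff)

lemma upart_add: "upart (a + b) = upart a + upart b" by (simp add: upart_def vec_eq_iff)

lemma xpart_scaleR: "xpart (r *\<^sub>R a) = r *\<^sub>R xpart a" by (simp add: xpart_def vec_eq_iff)

lemma upart_scaleR: "upart (r *\<^sub>R a) = r *\<^sub>R upart a" by (simp add: upart_def vec_eq_iff)

lemma xpart_axis: "xpart (axis (Inl p) 1) = axis p 1" "xpart (axis (Inr p) 1) = 0"
  by (simp_all add: xpart_def vec_eq_iff axis_def)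

lemma upart_axis: "upart (axis (Inl p) 1) = 0" "upart (axis (Inr p) 1) = axis p 1"
  by (simp_all add: upart_def vec_eq_iff axis_def)

lemma xpart_pair_vec: "xpart (pair_vec x u) = x" by (simp add: xpart_def vec_eq_iff)

lemma upart_pair_vec: "upart (pair_vec x u) = u" by (simp add: upart_def vec_eq_iff)

lemma horizontal_line_parts:
  "xpart (z + t *\<^sub>R axis (Inl p) 1) = xpart z + t *\<^sub>R axis p 1"
  "upart (z + t *\<^sub>R axis (Inl p) 1) = upart z"
  by (simp_all add: xpart_add upart_add xpart_scaleR upart_scaleR xpart_axis upart_axis)

lemma vertical_line_parts:
  "xpart (z + t *\<^sub>R axis (Inr p) 1) = xpart z"
  "upart (z + t *\<^sub>R axis (Inr p) 1) = upart z + t *\<^sub>R axis p 1"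
  by (simp_all add: xpart_add upart_add xpart_scaleR upart_scaleR xpart_axis upart_axis)

definition nonlinear_connection :: "(real^'n \<Rightarrow> real^'n^'n) \<Rightarrow> real^'n \<Rightarrow> real^'n \<Rightarrow> real^'n^'n" where
  "nonlinear_connection g x u = (\<chi> i k. \<Sum>j\<in>UNIV. u$j * christoffel g x k i j)"

definition phi_covector :: "(real^'n \<Rightarrow> real^'n^'n) \<Rightarrow> (real^'n \<Rightarrow> real^'n^'n) \<Rightarrow> real^'n \<Rightarrow> real^'n \<Rightarrow> real^'n" where
  "phi_covector g \<phi> x u = g x *v (\<phi> x *v u)"

definition vertical_metric :: "(real^'n \<Rightarrow> real^'n^'n) \<Rightarrow> (real^'n \<Rightarrow> real^'n^'n) \<Rightarrow> real \<Rightarrow> real^'n \<Rightarrow> real^'n \<Rightarrow> real^'n^'n" where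
  "vertical_metric g \<phi> \<delta> x u = g x + \<delta>^2 *\<^sub>R outer (phi_covector g \<phi> x u) (phi_covector g \<phi> x u)"

definition lifted_covector :: "(real^'n \<Rightarrow> real^'n^'n) \<Rightarrow> (real^'n \<Rightarrow> real^'n^'n) \<Rightarrow> real^('n+'n) \<Rightarrow> real^('n+'n)" where
  "lifted_covector g \<phi> z =
    pair_vec (nonlinear_connection g (xpart z) (upart z) *v phi_covector g \<phi> (xpart z) (upart z))
      (phi_covector g \<phi> (xpart z) (upart z))"

definition lifted_phi :: "(real^'n \<Rightarrow> real^'n^'n) \<Rightarrow> real^('n+'n) \<Rightarrow> real^('n+'n)" where
  "lifted_phi \<phi> z = pair_vec 0 (\<phi> (xpart z) *v upart z)"

lemma nonlinear_connection_linear: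
  "nonlinear_connection g x (u + t *\<^sub>R v) = nonlinear_connection g x u + t *\<^sub>R nonlinear_connection g x v"
  by (simp add: nonlinear_connection_def vec_eq_iff algebra_simps sum.distrib sum_distrib_left)

lemma phi_covector_linear:
  "phi_covector g \<phi> x (u + t *\<^sub>R v) = phi_covector g \<phi> x u + t *\<^sub>R phi_covector g \<phi> x v"
  by (simp add: phi_covector_def matrix_vector_right_distrib matrix_vector_mult_scaleR)

lemma gform_axis: "gform g x (axis i 1) v = (g x *v v) $ i"
  unfolding gform_def by (simp add: inner_axis')

lemma berger_metric_block:
  "berger_metric g \<phi> \<delta> z = block_mat
      (g (xpart z) + nonlinear_connection g (xpart z) (upart z) ** vertical_metric g \<phi> \<delta> (xpart z) (upart z)
        ** transpose (nonlinear_connection g (xpart z) (upart z)))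
      (nonlinear_connection g (xpart z) (upart z) ** vertical_metric g \<phi> \<delta> (xpart z) (upart z))
      (vertical_metric g \<phi> \<delta> (xpart z) (upart z) ** transpose (nonlinear_connection g (xpart z) (upart z)))
      (vertical_metric g \<phi> \<delta> (xpart z) (upart z))"
proof -
  define x where "x = xpart z"
  define u where "u = upart z"
  define N where "N = nonlinear_connection g x u"
  define h where "h = vertical_metric g \<phi> \<delta> x u"
  have Nc: "(\<Sum>j\<in>UNIV. u $ j * christoffel g x k i j) = N$i$k" for i k by (simp add: N_def nonlinear_connection_def)
  have hc: "g x $ i $ j + \<delta>\<^sup>2 * gform g x (axis i 1) (\<phi> x *v u) * gform g x (axis j 1) (\<phi> x *v u) = h$i$j" for i j
    by (simp add: h_def vertical_metric_def gform_axis phi_covector_def)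
  have LL: "(\<Sum>k\<in>UNIV. \<Sum>l\<in>UNIV. N$i$k * N$j$l * h$k$l) = (N ** h ** transpose N)$i$j" for i j
    unfolding matrix_matrix_mult_def transpose_def
    by (simp add: sum_distrib_right sum_distrib_left mult_ac, rule sum.swap)
  have LR: "(\<Sum>k\<in>UNIV. N$i$k * h$k$j) = (N ** h)$i$j" for i j
    by (simp add: matrix_matrix_mult_def)
  have RL: "(\<Sum>k\<in>UNIV. N$j$k * h$i$k) = (h ** transpose N)$i$j" for i j
    by (simp add: matrix_matrix_mult_def transpose_def mult.commute)
  show ?thesis
    unfolding x_def[symmetric] u_def[symmetric] N_def[symmetric] h_def[symmetric]
    unfolding berger_metric_def Let_def x_def[symmetric] u_def[symmetric] Nc hc
    by (simp add: vec_eq_iff, intro allI, rename_tac a b, case_tac a; case_tac b; simp add: LL LR RL)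
qed

lemma vertical_metric_0: "vertical_metric g \<phi> 0 x u = g x" by (simp add: vertical_metric_def)

lemma sasaki_metric_block:
  "sasaki_metric g \<phi> z = block_mat
      (g (xpart z) + nonlinear_connection g (xpart z) (upart z) ** g (xpart z)
        ** transpose (nonlinear_connection g (xpart z) (upart z)))
      (nonlinear_connection g (xpart z) (upart z) ** g (xpart z))
      (g (xpart z) ** transpose (nonlinear_connection g (xpart z) (upart z)))
      (g (xpart z))"
  unfolding sasaki_metric_def berger_metric_block vertical_metric_0 ..

lemma sasaki_metric_symmetric:
  assumes "transpose (g (xpart z)) = g (xpart z)"
  shows "transpose (sasaki_metric g \<phi> z) = sasaki_metric g \<phi> z"
  unfolding sasaki_metric_block transpose_block_mat
  by (simp add: assms matrix_transpose_mul matrix_mul_assoc transpose_add)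

lemma sasaki_metric_mult_lifted_phi: "sasaki_metric g \<phi> z *v lifted_phi \<phi> z = lifted_covector g \<phi> z"
  unfolding sasaki_metric_block lifted_phi_def lifted_covector_def block_mat_mv phi_covector_def
  by (simp add: matrix_vector_mul_assoc[symmetric])

lemma lifted_covector_inner_lifted_phi:
  "lifted_covector g \<phi> z \<bullet> lifted_phi \<phi> z
    = (g (xpart z) *v (\<phi> (xpart z) *v upart z)) \<bullet> (\<phi> (xpart z) *v upart z)"
  by (simp add: lifted_covector_def lifted_phi_def inner_pair_vec phi_covector_def)

lemma berger_metric_rank_one: "berger_metric g \<phi> \<delta> z = sasaki_metric g \<phi> z + \<delta>^2 *\<^sub>R outer (lifted_covector g \<phi> z) (lifted_covector g \<phi> z)"
proof -
  define N where "N = nonlinear_connection g (xpart z) (upart z)"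
  define w where "w = phi_covector g \<phi> (xpart z) (upart z)"
  define G where "G = g (xpart z)"
  have h: "vertical_metric g \<phi> \<delta> (xpart z) (upart z) = G + \<delta>^2 *\<^sub>R outer w w" by (simp add: vertical_metric_def G_def w_def)
  show ?thesis
    unfolding berger_metric_block sasaki_metric_block lifted_covector_def N_def[symmetric] w_def[symmetric] G_def[symmetric] h
      outer_pair_vec block_mat_scaleR block_mat_add
    by (simp add: matrix_add_ldistrib matrix_add_rdistrib matrix_scalar_ac scalar_matrix_assoc[symmetric]
        mult_outer outer_mult outer_scaleR_left scaleR_matrix_vector_assoc[symmetric] add.assoc)
qed

lemma sasaki_block_right_inverse:
  fixes g gi N :: "real^'n^'n"
  assumes "g ** gi = mat 1"
  shows "block_mat (g + N ** g ** transpose N) (N ** g) (g ** transpose N) g **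
         block_mat gi (-(gi ** N)) (-(transpose N ** gi)) (gi + transpose N ** gi ** N) = mat 1"
proof -
  have a: "X ** g ** gi = X" for X :: "real^'n^'n"
    by (metis assms matrix_mul_assoc matrix_mul_rid)
  show ?thesis
    unfolding block_mat_mult mat1_eq_block_mat
    by (simp add: matrix_add_rdistrib matrix_add_ldistrib matrix_neg_right matrix_neg_left
        matrix_mul_assoc a assms)
qed

lemma sasaki_metric_inverse:
  fixes g \<phi> :: "real^'n \<Rightarrow> real^'n^'n" and z :: "real^('n+'n)"
  defines "gi \<equiv> matrix_inv (g (xpart z))" and "N \<equiv> nonlinear_connection g (xpart z) (upart z)"
  assumes inv: "invertible (g (xpart z))"
  shows "matrix_inv (sasaki_metric g \<phi> z)
      = block_mat gi (-(gi ** N)) (-(transpose N ** gi)) (gi + transpose N ** gi ** N)"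
    and "invertible (sasaki_metric g \<phi> z)"
proof -
  have "sasaki_metric g \<phi> z ** block_mat gi (-(gi ** N)) (-(transpose N ** gi)) (gi + transpose N ** gi ** N)
      = mat 1"
    unfolding sasaki_metric_block gi_def N_def
    by (rule sasaki_block_right_inverse[OF matrix_inv_props(1)[OF inv]])
  then show "matrix_inv (sasaki_metric g \<phi> z)
      = block_mat gi (-(gi ** N)) (-(transpose N ** gi)) (gi + transpose N ** gi ** N)"
    and "invertible (sasaki_metric g \<phi> z)"
    using matrix_inv_eqI matrix_left_right_inverse invertible_def by blast+
qed

lemma sasaki_metric_vertical_line:
  fixes g \<phi> :: "real^'n \<Rightarrow> real^'n^'n" and z :: "real^('n+'n)" and j :: 'n
  defines "N \<equiv> nonlinear_connection g (xpart z) (upart z)" and "B \<equiv> nonlinear_connection g (xpart z) (axis j 1)" and "G \<equiv> g (xpart z)"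
  shows "sasaki_metric g \<phi> (z + t *\<^sub>R axis (Inr j) 1) = sasaki_metric g \<phi> z
     + t *\<^sub>R block_mat (B ** G ** transpose N + N ** G ** transpose B) (B ** G) (G ** transpose B) 0
     + t^2 *\<^sub>R block_mat (B ** G ** transpose B) 0 0 0"
  unfolding sasaki_metric_block vertical_line_parts nonlinear_connection_linear N_def[symmetric] B_def[symmetric] G_def[symmetric]
  by (simp add: block_mat_add block_mat_scaleR matrix_add_ldistrib matrix_add_rdistrib transpose_add transpose_scalar
      matrix_scalar_ac scalar_matrix_assoc[symmetric] power2_eq_square algebra_simps)

lemma pd_sasaki_metric_vertical:
  fixes g \<phi> :: "real^'n \<Rightarrow> real^'n^'n" and z :: "real^('n+'n)" and j :: 'n
  defines "N \<equiv> nonlinear_connection g (xpart z) (upart z)" and "B \<equiv> nonlinear_connection g (xpart z) (axis j 1)" and "G \<equiv> g (xpart z)"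
  shows "pd (\<lambda>w. sasaki_metric g \<phi> w $ a $ b) (Inr j) z
           = block_mat (B ** G ** transpose N + N ** G ** transpose B) (B ** G) (G ** transpose B) 0 $ a $ b"
    "pd_exists (\<lambda>w. sasaki_metric g \<phi> w $ a $ b) z (Inr j)"
  by (rule pd_quadratic_line, simp add: sasaki_metric_vertical_line N_def B_def G_def)+

lemma lifted_phi_vertical_line: "lifted_phi \<phi> (z + t *\<^sub>R axis (Inr j) 1) = lifted_phi \<phi> z + t *\<^sub>R pair_vec 0 (\<phi> (xpart z) *v axis j 1)"
  unfolding lifted_phi_def vertical_line_parts
  by (simp add: vec_eq_iff matrix_vector_right_distrib matrix_vector_mult_scaleR,
      intro allI, rename_tac a, case_tac a, simp_all)

lemma pd_lifted_phi_vertical: "pd (\<lambda>w. lifted_phi \<phi> w $ l) (Inr j) z = pair_vec 0 (\<phi> (xpart z) *v axis j 1) $ l"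
   "pd_exists (\<lambda>w. lifted_phi \<phi> w $ l) z (Inr j)"
  by (rule pd_quadratic_line[where C=0], simp add: lifted_phi_vertical_line)+

lemma lifted_covector_vertical_line:
  fixes g \<phi> :: "real^'n \<Rightarrow> real^'n^'n" and z :: "real^('n+'n)" and j :: 'n
  defines "N \<equiv> nonlinear_connection g (xpart z) (upart z)" and "B \<equiv> nonlinear_connection g (xpart z) (axis j 1)"
    and "w \<equiv> phi_covector g \<phi> (xpart z) (upart z)" and "w' \<equiv> phi_covector g \<phi> (xpart z) (axis j 1)"
  shows "lifted_covector g \<phi> (z + t *\<^sub>R axis (Inr j) 1) = lifted_covector g \<phi> z + t *\<^sub>R pair_vec (B *v w + N *v w') w' + t^2 *\<^sub>R pair_vec (B *v w') 0"
  unfolding lifted_covector_def vertical_line_parts nonlinear_connection_linear phi_covector_linear N_def[symmetric] B_def[symmetric] w_def[symmetric] w'_def[symmetric]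
  by (simp add: vec_eq_iff matrix_vector_right_distrib matrix_vector_mult_scaleR scaleR_matrix_vector_assoc[symmetric] matrix_vector_mult_add_rdistrib
      power2_eq_square algebra_simps, intro allI, rename_tac a, case_tac a, simp_all add: algebra_simps)

lemma pd_lifted_covector_vertical:
  fixes g \<phi> :: "real^'n \<Rightarrow> real^'n^'n" and z :: "real^('n+'n)" and j :: 'n
  defines "N \<equiv> nonlinear_connection g (xpart z) (upart z)" and "B \<equiv> nonlinear_connection g (xpart z) (axis j 1)"
    and "w \<equiv> phi_covector g \<phi> (xpart z) (upart z)" and "w' \<equiv> phi_covector g \<phi> (xpart z) (axis j 1)"
  shows "pd (\<lambda>w. lifted_covector g \<phi> w $ l) (Inr j) z = pair_vec (B *v w + N *v w') w' $ l"
  by (rule pd_quadratic_line, simp add: lifted_covector_vertical_line N_def B_def w_def w'_def)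

lemma pd_lifted_phi_Inl: "pd (\<lambda>w. lifted_phi \<phi> w $ Inl i) a z = 0"
  by (rule pd_eqI) (simp add: lifted_phi_def)

lemma pd_exists_lifted_phi_horizontal:
  fixes \<phi> :: "real^'n \<Rightarrow> real^'n^'n"
  assumes "\<forall>i j. smooth_on U (\<lambda>x. \<phi> x $ i $ j)" "xpart z \<in> U"
  shows "pd_exists (\<lambda>w. lifted_phi \<phi> w $ l) z (Inl p)"
proof -
  have "vec_curve_diff (\<lambda>t. lifted_phi \<phi> (z + t *\<^sub>R axis (Inl p) 1))"
    unfolding lifted_phi_def horizontal_line_parts
    using smooth_mat_curve_diff[OF assms, of p]
    by (intro vec_curve_diff_pair_vec vec_curve_diff_mv vec_curve_diff_const) auto
  then show ?thesis unfolding vec_curve_diff_def pd_exists_def by blast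
qed

lemma pd_lifted_covector_Inr_horizontal:
  fixes g \<phi> :: "real^'n \<Rightarrow> real^'n^'n"
  assumes smg: "\<forall>i j. smooth_on U (\<lambda>x. g x $ i $ j)"
    and smp: "\<forall>i j. smooth_on U (\<lambda>x. \<phi> x $ i $ j)" and xU: "xpart z \<in> U"
  shows "pd (\<lambda>w. lifted_covector g \<phi> w $ Inr j) (Inl p) z =
     (\<Sum>k\<in>UNIV. pd (\<lambda>y. g y $ j $ k) p (xpart z) * (\<phi> (xpart z) *v upart z) $ k)
     + (\<Sum>k\<in>UNIV. g (xpart z) $ j $ k * (\<Sum>m\<in>UNIV. pd (\<lambda>y. \<phi> y $ k $ m) p (xpart z) * upart z $ m))"
proof -
  define x where "x = xpart z"
  define u where "u = upart z"
  have e: "lifted_covector g \<phi> (z + t *\<^sub>R axis (Inl p) 1) $ Inr j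
     = (\<Sum>k\<in>UNIV. g (x + t *\<^sub>R axis p 1) $ j $ k * (\<Sum>m\<in>UNIV. \<phi> (x + t *\<^sub>R axis p 1) $ k $ m * u $ m))" for t
    unfolding lifted_covector_def horizontal_line_parts x_def u_def by (simp add: phi_covector_def matrix_vector_mult_def)
  have Dg: "DERIV (\<lambda>t. g (x + t *\<^sub>R axis p 1) $ j $ k) 0 :> pd (\<lambda>y. g y $ j $ k) p x" for k
    using smooth_on_line_DERIV[OF _ xU[folded x_def]] smg by blast
  have Dp: "DERIV (\<lambda>t. \<phi> (x + t *\<^sub>R axis p 1) $ k $ m) 0 :> pd (\<lambda>y. \<phi> y $ k $ m) p x" for k m
    using smooth_on_line_DERIV[OF _ xU[folded x_def]] smp by blast
  have "DERIV (\<lambda>t. lifted_covector g \<phi> (z + t *\<^sub>R axis (Inl p) 1) $ Inr j) 0 :>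
     (\<Sum>k\<in>UNIV. pd (\<lambda>y. g y $ j $ k) p x * (\<Sum>m\<in>UNIV. \<phi> x $ k $ m * u $ m)
        + (\<Sum>m\<in>UNIV. pd (\<lambda>y. \<phi> y $ k $ m) p x * u $ m) * g x $ j $ k)"
    unfolding e
  proof (rule DERIV_sum)
    fix k
    have Ds: "DERIV (\<lambda>t. \<Sum>m\<in>UNIV. \<phi> (x + t *\<^sub>R axis p 1) $ k $ m * u $ m) 0 :> (\<Sum>m\<in>UNIV. pd (\<lambda>y. \<phi> y $ k $ m) p x * u $ m)"
      by (rule DERIV_sum) (rule DERIV_cmult_right[OF Dp])
    show "DERIV (\<lambda>t. g (x + t *\<^sub>R axis p 1) $ j $ k * (\<Sum>m\<in>UNIV. \<phi> (x + t *\<^sub>R axis p 1) $ k $ m * u $ m)) 0 :>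
      pd (\<lambda>y. g y $ j $ k) p x * (\<Sum>m\<in>UNIV. \<phi> x $ k $ m * u $ m) + (\<Sum>m\<in>UNIV. pd (\<lambda>y. \<phi> y $ k $ m) p x * u $ m) * g x $ j $ k"
      using DERIV_mult[OF Dg Ds] by simp
  qed
  then show ?thesis unfolding x_def[symmetric] u_def[symmetric]
    by (subst pd_eqI, assumption) (simp add: matrix_vector_mult_def sum.distrib algebra_simps)
qed

lemma lifted_covector_curl_algebra:
  fixes G P \<Gamma> dg dp :: "real^'n^'n"
  assumes "dg = G ** \<Gamma> + transpose \<Gamma> ** G" "dp = P ** \<Gamma> - \<Gamma> ** P"
  shows "dg *v (P *v u) + G *v (dp *v u) = transpose \<Gamma> *v (G *v (P *v u)) + (G ** P) *v (\<Gamma> *v u)"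
  unfolding assms
  by (simp add: matrix_vector_mult_add_rdistrib matrix_vector_mult_diff_rdistrib matrix_vector_right_distrib
      matrix_vector_mul_assoc matrix_vector_mult_diff_distrib matrix_mul_assoc matrix_add_rdistrib)

lemma lifted_covector_curl_vertical:
  fixes g \<phi> :: "real^'n \<Rightarrow> real^'n^'n" and z :: "real^('n+'n)"
  assumes "transpose (g (xpart z) ** \<phi> (xpart z)) = g (xpart z) ** \<phi> (xpart z)"
  shows "pd (\<lambda>w. lifted_covector g \<phi> w $ Inr m) (Inr j) z = pd (\<lambda>w. lifted_covector g \<phi> w $ Inr j) (Inr m) z"
  unfolding pd_lifted_covector_vertical
  using symmetric_matrix_nth[OF assms, of m j]
  by (simp add: phi_covector_def matrix_vector_mult_def matrix_matrix_mult_def sum_axis sum_axis')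

lemma trace_sasaki_vertical_derivative:
  fixes gi g N B :: "real^'n^'n" and \<psi> :: "real^'n"
  shows "(\<Sum>a\<in>UNIV. \<Sum>b\<in>UNIV. (block_mat gi (-(gi ** N)) (-(transpose N ** gi)) (gi + transpose N ** gi ** N)
       - c *\<^sub>R outer (pair_vec 0 \<psi>) (pair_vec 0 \<psi>))$a$b *
     (block_mat (B ** g ** transpose N + N ** g ** transpose B) (B ** g) (g ** transpose B) 0)$a$b) = 0"
proof -
  have split: "(\<Sum>a\<in>UNIV. \<Sum>b\<in>UNIV. F a b) = (\<Sum>i\<in>UNIV. \<Sum>j\<in>UNIV. F (Inl i) (Inl j)) + (\<Sum>i\<in>UNIV. \<Sum>j\<in>UNIV. F (Inl i) (Inr j))
     + (\<Sum>i\<in>UNIV. \<Sum>j\<in>UNIV. F (Inr i) (Inl j)) + (\<Sum>i\<in>UNIV. \<Sum>j\<in>UNIV. F (Inr i) (Inr j))"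
    for F :: "'n + 'n \<Rightarrow> 'n + 'n \<Rightarrow> real"
    by (simp add: sum_UNIV_Plus sum.distrib)
  have "(\<Sum>a\<in>UNIV. \<Sum>b\<in>UNIV. (block_mat gi (-(gi ** N)) (-(transpose N ** gi)) (gi + transpose N ** gi ** N)
       - c *\<^sub>R outer (pair_vec 0 \<psi>) (pair_vec 0 \<psi>))$a$b *
     (block_mat (B ** g ** transpose N + N ** g ** transpose B) (B ** g) (g ** transpose B) 0)$a$b)
     = frob_pairing gi (B ** g ** transpose N) + frob_pairing gi (N ** (g ** transpose B)) - frob_pairing (gi ** N) (B ** g)
       - frob_pairing (transpose N ** gi) (g ** transpose B)"
    unfolding split frob_pairing_def by (simp add: sum.distrib algebra_simps sum_negf matrix_mul_assoc)
  also have "\<dots> = 0"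
    unfolding frob_mult_right[of gi "B ** g"] frob_mult_left[of gi N] by simp
  finally show ?thesis .
qed

lemma trace_pd_sasaki_along_lifted_phi:
  fixes g \<phi> :: "real^'n \<Rightarrow> real^'n^'n" and gi :: "real^'n^'n" and z :: "real^('n+'n)"
  defines "N \<equiv> nonlinear_connection g (xpart z) (upart z)" and "\<zeta> \<equiv> lifted_phi \<phi> z"
  shows "(\<Sum>a\<in>UNIV. \<Sum>b\<in>UNIV.
      (block_mat gi (-(gi ** N)) (-(transpose N ** gi)) (gi + transpose N ** gi ** N) - c *\<^sub>R outer \<zeta> \<zeta>)$a$b
        * (\<Sum>l\<in>UNIV. \<zeta>$l * pd (\<lambda>w. sasaki_metric g \<phi> w $ a $ b) l z)) = 0"
proof -
  define M where "M = block_mat gi (-(gi ** N)) (-(transpose N ** gi)) (gi + transpose N ** gi ** N) - c *\<^sub>R outer \<zeta> \<zeta>"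
  define \<psi> where "\<psi> = \<phi> (xpart z) *v upart z"
  define D where "D j = block_mat
      (nonlinear_connection g (xpart z) (axis j 1) ** g (xpart z) ** transpose N
        + N ** g (xpart z) ** transpose (nonlinear_connection g (xpart z) (axis j 1)))
      (nonlinear_connection g (xpart z) (axis j 1) ** g (xpart z))
      (g (xpart z) ** transpose (nonlinear_connection g (xpart z) (axis j 1))) 0" for j
  have \<zeta>_eq: "\<zeta> = pair_vec 0 \<psi>" by (simp add: \<zeta>_def \<psi>_def lifted_phi_def)
  have "(\<Sum>l\<in>UNIV. \<zeta>$l * pd (\<lambda>w. sasaki_metric g \<phi> w $ a $ b) l z) = (\<Sum>j\<in>UNIV. \<psi>$j * D j $ a $ b)" for a b
    by (simp add: sum_UNIV_Plus \<zeta>_eq pd_sasaki_metric_vertical(1) D_def N_def)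
  then have "(\<Sum>a\<in>UNIV. \<Sum>b\<in>UNIV. M$a$b * (\<Sum>l\<in>UNIV. \<zeta>$l * pd (\<lambda>w. sasaki_metric g \<phi> w $ a $ b) l z))
      = (\<Sum>a\<in>UNIV. \<Sum>b\<in>UNIV. \<Sum>j\<in>UNIV. \<psi>$j * (M$a$b * D j $ a $ b))"
    by (simp add: sum_distrib_left mult_ac)
  also have "\<dots> = (\<Sum>j\<in>UNIV. \<psi>$j * (\<Sum>a\<in>UNIV. \<Sum>b\<in>UNIV. M$a$b * D j $ a $ b))"
    by (subst sum_rotate3, subst sum_rotate3) (simp add: sum_distrib_left)
  also have "\<dots> = 0"
  proof -
    have "(\<Sum>a\<in>UNIV. \<Sum>b\<in>UNIV. M$a$b * D j $ a $ b) = 0" for j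
      unfolding M_def D_def \<zeta>_eq by (rule trace_sasaki_vertical_derivative)
    then show ?thesis by simp
  qed
  finally show ?thesis unfolding M_def .
qed

lemma trace_pd_lifted_phi:
  fixes g \<phi> :: "real^'n \<Rightarrow> real^'n^'n" and z :: "real^('n+'n)"
  defines "\<psi> \<equiv> \<phi> (xpart z) *v upart z"
  shows "(\<Sum>a\<in>UNIV. \<Sum>l\<in>UNIV. (mat 1 - c *\<^sub>R outer (lifted_phi \<phi> z) (lifted_covector g \<phi> z))$a$l
          * pd (\<lambda>w. lifted_phi \<phi> w $ l) a z)
      = (\<Sum>j\<in>UNIV. \<phi> (xpart z) $ j $ j) - c * ((g (xpart z) *v \<psi>) \<bullet> (\<phi> (xpart z) *v \<psi>))"
proof -
  define P where "P = \<phi> (xpart z)"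
  define w where "w = g (xpart z) *v \<psi>"
  have pd_vertical: "pd (\<lambda>w. lifted_phi \<phi> w $ Inr k) (Inr j) z = P $ k $ j" for j k
    unfolding pd_lifted_phi_vertical(1) by (simp add: matrix_vector_mult_def sum_axis' P_def)
  have \<zeta>_Inl: "lifted_phi \<phi> z $ Inl i = 0" and \<zeta>_Inr: "lifted_phi \<phi> z $ Inr j = \<psi> $ j"
    and \<theta>_Inr: "lifted_covector g \<phi> z $ Inr k = w $ k" for i j k
    by (simp_all add: lifted_phi_def lifted_covector_def phi_covector_def \<psi>_def w_def)
  have "(\<Sum>a\<in>UNIV. \<Sum>l\<in>UNIV. (mat 1 - c *\<^sub>R outer (lifted_phi \<phi> z) (lifted_covector g \<phi> z))$a$l
          * pd (\<lambda>w. lifted_phi \<phi> w $ l) a z)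
      = (\<Sum>j\<in>UNIV. \<Sum>k\<in>UNIV. ((if j = k then 1 else 0) - c * (\<psi>$j * w$k)) * P $ k $ j)"
    by (simp add: sum_UNIV_Plus pd_lifted_phi_Inl pd_vertical mat_def \<zeta>_Inl \<zeta>_Inr \<theta>_Inr)
  also have "\<dots> = (\<Sum>j\<in>UNIV. P $ j $ j) - c * (\<Sum>j\<in>UNIV. \<Sum>k\<in>UNIV. \<psi>$j * (w$k * P $ k $ j))"
  proof -
    have "(\<Sum>k\<in>UNIV. ((if j = k then 1 else 0) - c * (\<psi>$j * w$k)) * P $ k $ j)
        = (\<Sum>k\<in>UNIV. if k = j then P $ k $ j else 0) - (\<Sum>k\<in>UNIV. c * (\<psi>$j * (w$k * P $ k $ j)))" for j
      by (subst sum_subtractf[symmetric], rule sum.cong) (auto simp: algebra_simps)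
    then show ?thesis by (simp add: sum_subtractf sum_distrib_left)
  qed
  also have "(\<Sum>j\<in>UNIV. \<Sum>k\<in>UNIV. \<psi>$j * (w$k * P $ k $ j)) = w \<bullet> (P *v \<psi>)"
    unfolding inner_vec_def matrix_vector_mult_def
    by (simp add: sum_distrib_left mult_ac, rule sum.swap)
  finally show ?thesis unfolding P_def w_def .
qed

section \<open>Riemannian metrics and parallel endomorphisms in a chart\<close>

locale riemannian_chart =
  fixes U :: "(real^'n) set" and g :: "real^'n \<Rightarrow> real^'n^'n"
  assumes open_U: "open U"
    and smooth_g: "\<forall>i j. smooth_on U (\<lambda>x. g x $ i $ j)"
    and symmetric_g: "\<forall>x\<in>U. transpose (g x) = g x"
    and positive_g: "\<forall>x\<in>U. \<forall>v. v \<noteq> 0 \<longrightarrow> gform g x v v > 0"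
begin

lemma invertible_g: "x \<in> U \<Longrightarrow> invertible (g x)"
  using positive_g by (intro posdef_invertible) (auto simp: gform_def)

lemma g_mult_inv: "x \<in> U \<Longrightarrow> g x ** matrix_inv (g x) = mat 1"
  using matrix_inv_props(1)[OF invertible_g] .

lemma christoffel_line_differentiable:
  assumes xU: "x \<in> U"
  shows "(\<lambda>t. christoffel g (x + t *\<^sub>R axis p 1) k i j) differentiable (at 0)"
proof -
  obtain e where e: "e > 0" "\<And>t. \<bar>t\<bar> < e \<Longrightarrow> x + t *\<^sub>R axis p 1 \<in> U"
    using open_contains_axis_line[OF open_U xU] by blast
  have "mat_curve_diff (\<lambda>t. matrix_inv (g (x + t *\<^sub>R axis p 1)))"
    using e by (intro matrix_inv_curve_diff[OF smooth_mat_curve_diff[OF smooth_g xU]] invertible_g)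
  moreover have "(\<lambda>t. pd (\<lambda>w. g w $ a $ b) c (x + t *\<^sub>R axis p 1)) differentiable (at 0)" for a b c
    using smooth_on_line_differentiable(2)[OF _ xU] smooth_g by blast
  ultimately show ?thesis
    unfolding christoffel_def mat_curve_diff_def
    by (intro differentiable_mult differentiable_sum differentiable_const differentiable_add
        differentiable_diff ballI) auto
qed

lemma pd_exists_sasaki_horizontal:
  assumes "xpart z \<in> U"
  shows "pd_exists (\<lambda>w. sasaki_metric g \<phi> w $ a $ b) z (Inl p)"
proof -
  have "mat_curve_diff (\<lambda>t. nonlinear_connection g (xpart z + t *\<^sub>R axis p 1) (upart z))"
    unfolding mat_curve_diff_def nonlinear_connection_def
    using christoffel_line_differentiable[OF assms]
    by (auto intro!: differentiable_sum differentiable_mult)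
  then have "mat_curve_diff (\<lambda>t. sasaki_metric g \<phi> (z + t *\<^sub>R axis (Inl p) 1))"
    unfolding sasaki_metric_block horizontal_line_parts
    using smooth_mat_curve_diff[OF smooth_g assms, of p]
    by (intro mat_curve_diff_block_mat mat_curve_diff_add mat_curve_diff_mult mat_curve_diff_transpose)
  then show ?thesis unfolding mat_curve_diff_def pd_exists_def by blast
qed

lemma pd_symmetric_metric:
  assumes xU: "x \<in> U"
  shows "pd (\<lambda>y. g y $ b $ c) a x = pd (\<lambda>y. g y $ c $ b) a x"
proof -
  obtain e where e: "e > 0" "\<And>t. \<bar>t\<bar> < e \<Longrightarrow> x + t *\<^sub>R axis a 1 \<in> U"
    using open_contains_axis_line[OF open_U xU] by blast
  have D1: "DERIV (\<lambda>t. g (x + t *\<^sub>R axis a 1) $ b $ c) 0 :> pd (\<lambda>y. g y $ b $ c) a x"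
    and D2: "DERIV (\<lambda>t. g (x + t *\<^sub>R axis a 1) $ c $ b) 0 :> pd (\<lambda>y. g y $ c $ b) a x"
    using smooth_on_line_DERIV[OF _ xU] smooth_g by blast+
  have ev: "eventually (\<lambda>t. g (x + t *\<^sub>R axis a 1) $ b $ c = g (x + t *\<^sub>R axis a 1) $ c $ b) (nhds 0)"
    unfolding eventually_nhds_metric
  proof (intro exI[of _ e] conjI allI impI)
    fix t :: real assume "dist t 0 < e"
    then have "x + t *\<^sub>R axis a 1 \<in> U" using e(2) by (simp add: dist_real_def)
    then show "g (x + t *\<^sub>R axis a 1) $ b $ c = g (x + t *\<^sub>R axis a 1) $ c $ b"
      using symmetric_g symmetric_matrix_nth by blast
  qed (use e in simp)
  have "DERIV (\<lambda>t. g (x + t *\<^sub>R axis a 1) $ c $ b) 0 :> pd (\<lambda>y. g y $ b $ c) a x"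
    using DERIV_cong_ev[OF refl ev refl] D1 by blast
  then show ?thesis using D2 DERIV_unique by blast
qed

text \<open>Metric compatibility of the Levi-Civita connection, in matrix form:
  \<open>\<partial>\<^sub>q g = g \<Gamma>\<^sub>q + \<Gamma>\<^sub>q\<^sup>T g\<close> with \<open>(\<Gamma>\<^sub>q)\<^sub>l\<^sub>j = \<Gamma>\<^sup>l\<^sub>q\<^sub>j\<close>.\<close>
lemma pd_metric_christoffel:
  assumes xU: "x \<in> U"
  shows "(\<chi> j k. pd (\<lambda>y. g y $ j $ k) q x)
      = g x ** (\<chi> l j. christoffel g x l q j) + transpose (\<chi> l j. christoffel g x l q j) ** g x"
proof -
  define dg where "dg a b c = pd (\<lambda>y. g y $ b $ c) a x" for a b c
  have ds: "dg a b c = dg a c b" for a b c unfolding dg_def using pd_symmetric_metric[OF xU] .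
  have cf: "christoffel g x l p k
      = (\<Sum>m\<in>UNIV. matrix_inv (g x) $ l $ m * ((1/2) * (dg p k m + dg k p m - dg m p k)))" for l p k
    unfolding christoffel_def dg_def by (simp add: sum_distrib_left algebra_simps)
  have "dg q j k = (\<Sum>l\<in>UNIV. g x $ j $ l * christoffel g x l q k)
      + (\<Sum>l\<in>UNIV. g x $ k $ l * christoffel g x l q j)" for j k
  proof -
    have "(\<Sum>l\<in>UNIV. g x $ j $ l * christoffel g x l q k) = (1/2) * (dg q k j + dg k q j - dg j q k)"
      unfolding cf by (rule right_inverse_contract[OF g_mult_inv[OF xU]])
    moreover have "(\<Sum>l\<in>UNIV. g x $ k $ l * christoffel g x l q j) = (1/2) * (dg q j k + dg j q k - dg k q j)"
      unfolding cf by (rule right_inverse_contract[OF g_mult_inv[OF xU]])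
    ultimately show ?thesis using ds[of q k j] ds[of k q j] ds[of j q k] by (simp add: algebra_simps)
  qed
  then show ?thesis
    using symmetric_matrix_nth[OF symmetric_g[rule_format, OF xU]]
    by (simp add: vec_eq_iff matrix_matrix_mult_def transpose_def dg_def mult.commute)
qed

lemma g_nonneg: "x \<in> U \<Longrightarrow> 0 \<le> (g x *v v) \<bullet> v"
  using positive_g by (cases "v = 0") (auto simp: gform_def inner_commute less_imp_le)

lemma berger_metric_inverse:
  fixes \<phi> :: "real^'n \<Rightarrow> real^'n^'n" and z :: "real^('n+'n)" and \<delta> :: real
  defines "\<psi> \<equiv> \<phi> (xpart z) *v upart z"
  defines "c \<equiv> \<delta>^2 / (1 + \<delta>^2 * ((g (xpart z) *v \<psi>) \<bullet> \<psi>))"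
  assumes xU: "xpart z \<in> U"
  shows "matrix_inv (berger_metric g \<phi> \<delta> z)
      = matrix_inv (sasaki_metric g \<phi> z) - c *\<^sub>R outer (lifted_phi \<phi> z) (lifted_phi \<phi> z)"
    and "invertible (berger_metric g \<phi> \<delta> z)"
proof -
  have "1 + \<delta>^2 * ((g (xpart z) *v \<psi>) \<bullet> \<psi>) \<noteq> 0"
    using g_nonneg[OF xU, of \<psi>] by (metis add_pos_nonneg mult_nonneg_nonneg zero_le_power2 zero_less_one
        order_less_irrefl)
  moreover have "transpose (sasaki_metric g \<phi> z) = sasaki_metric g \<phi> z"
    using sasaki_metric_symmetric symmetric_g xU by blast
  moreover have "invertible (sasaki_metric g \<phi> z)"
    using sasaki_metric_inverse(2) invertible_g xU by blast
  ultimately show "matrix_inv (berger_metric g \<phi> \<delta> z)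
      = matrix_inv (sasaki_metric g \<phi> z) - c *\<^sub>R outer (lifted_phi \<phi> z) (lifted_phi \<phi> z)"
    and "invertible (berger_metric g \<phi> \<delta> z)"
    using matrix_inv_rank_one_update[where G = "sasaki_metric g \<phi> z" and d = "\<delta>^2" and \<zeta> = "lifted_phi \<phi> z"]
    unfolding berger_metric_rank_one sasaki_metric_mult_lifted_phi lifted_covector_inner_lifted_phi c_def \<psi>_def
    by auto
qed

lemma berger_metric_inverse_symmetric:
  assumes xU: "xpart z \<in> U"
  shows "transpose (matrix_inv (berger_metric g \<phi> \<delta> z)) = matrix_inv (berger_metric g \<phi> \<delta> z)"
proof -
  have "transpose (sasaki_metric g \<phi> z) = sasaki_metric g \<phi> z"
    using sasaki_metric_symmetric symmetric_g xU by blast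
  moreover have "invertible (sasaki_metric g \<phi> z)"
    using sasaki_metric_inverse(2) invertible_g xU by blast
  ultimately show ?thesis
    unfolding berger_metric_inverse(1)[OF xU]
    by (simp add: matrix_inv_symmetric transpose_minus transpose_scalar transpose_outer)
qed

lemma berger_metric_inverse_mult_lifted_covector:
  fixes \<phi> :: "real^'n \<Rightarrow> real^'n^'n" and z :: "real^('n+'n)" and \<delta> :: real
  defines "\<psi> \<equiv> \<phi> (xpart z) *v upart z"
  assumes xU: "xpart z \<in> U"
  shows "matrix_inv (berger_metric g \<phi> \<delta> z) *v lifted_covector g \<phi> z
      = (1 / (1 + \<delta>^2 * ((g (xpart z) *v \<psi>) \<bullet> \<psi>))) *\<^sub>R lifted_phi \<phi> z"
proof -
  define s where "s = (g (xpart z) *v \<psi>) \<bullet> \<psi>"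
  have "matrix_inv (sasaki_metric g \<phi> z) *v lifted_covector g \<phi> z = lifted_phi \<phi> z"
    unfolding sasaki_metric_mult_lifted_phi[symmetric] matrix_vector_mul_assoc
    by (simp add: matrix_inv_props(2)[OF sasaki_metric_inverse(2)[where g = g and \<phi> = \<phi> and z = z,
        OF invertible_g[OF xU]]])
  moreover have "lifted_phi \<phi> z \<bullet> lifted_covector g \<phi> z = s"
    using lifted_covector_inner_lifted_phi unfolding s_def \<psi>_def by (simp add: inner_commute)
  ultimately have "matrix_inv (berger_metric g \<phi> \<delta> z) *v lifted_covector g \<phi> z
      = (1 - \<delta>^2 / (1 + \<delta>^2 * s) * s) *\<^sub>R lifted_phi \<phi> z"
    unfolding berger_metric_inverse(1)[OF xU] s_def[symmetric] \<psi>_def[symmetric]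
    by (simp add: matrix_vector_mult_diff_rdistrib scaleR_matrix_vector_assoc[symmetric] outer_mult_vector
        scaleR_diff_left)
  also have "1 - \<delta>^2 / (1 + \<delta>^2 * s) * s = 1 / (1 + \<delta>^2 * s)"
    using g_nonneg[OF xU, of \<psi>] unfolding s_def by (simp add: field_simps add_nonneg_eq_0_iff)
  finally show ?thesis unfolding s_def .
qed

lemma berger_metric_inverse_mult_sasaki:
  fixes \<phi> :: "real^'n \<Rightarrow> real^'n^'n" and z :: "real^('n+'n)" and \<delta> :: real
  defines "\<psi> \<equiv> \<phi> (xpart z) *v upart z"
  defines "c \<equiv> \<delta>^2 / (1 + \<delta>^2 * ((g (xpart z) *v \<psi>) \<bullet> \<psi>))"
  assumes xU: "xpart z \<in> U"
  shows "matrix_inv (berger_metric g \<phi> \<delta> z) ** sasaki_metric g \<phi> z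
      = mat 1 - c *\<^sub>R outer (lifted_phi \<phi> z) (lifted_covector g \<phi> z)"
proof -
  define M where "M = matrix_inv (berger_metric g \<phi> \<delta> z)"
  define \<theta> where "\<theta> = lifted_covector g \<phi> z"
  have "sasaki_metric g \<phi> z = berger_metric g \<phi> \<delta> z - \<delta>^2 *\<^sub>R outer \<theta> \<theta>"
    unfolding berger_metric_rank_one \<theta>_def by simp
  then have "M ** sasaki_metric g \<phi> z = M ** berger_metric g \<phi> \<delta> z - \<delta>^2 *\<^sub>R (M ** outer \<theta> \<theta>)"
    by (simp add: matrix_diff_ldistrib matrix_scalar_ac scalar_matrix_assoc)
  then show ?thesis
    unfolding mult_outer M_def \<theta>_def berger_metric_inverse_mult_lifted_covector[OF xU]
      matrix_inv_props(2)[OF berger_metric_inverse(2)[OF xU]]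
    by (simp add: outer_scaleR_left c_def \<psi>_def)
qed

end

locale parallel_selfadjoint_chart = riemannian_chart U g for U and g :: "real^'n \<Rightarrow> real^'n^'n" +
  fixes \<phi> :: "real^'n \<Rightarrow> real^'n^'n"
  assumes smooth_phi: "\<forall>i j. smooth_on U (\<lambda>x. \<phi> x $ i $ j)"
    and selfadjoint_phi: "\<forall>x\<in>U. \<forall>v w. gform g x (\<phi> x *v v) w = gform g x v (\<phi> x *v w)"
    and parallel_phi: "\<forall>x\<in>U. \<forall>a i j. nabla_phi g \<phi> x a i j = 0"
begin

lemma symmetric_g_mult_phi: "x \<in> U \<Longrightarrow> transpose (g x ** \<phi> x) = g x ** \<phi> x"
  using selfadjoint_phi symmetric_g
  by (intro selfadjoint_imp_symmetric_mult) (auto simp: gform_def)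

lemma pd_phi_commutator:
  assumes "x \<in> U"
  shows "(\<chi> k m. pd (\<lambda>y. \<phi> y $ k $ m) q x)
      = \<phi> x ** (\<chi> l j. christoffel g x l q j) - (\<chi> l j. christoffel g x l q j) ** \<phi> x"
  using parallel_phi assms
  by (simp add: vec_eq_iff nabla_phi_def matrix_matrix_mult_def algebra_simps)

text \<open>For the 1-form \<open>\<theta> = g\<^sub>S(\<zeta>, \<cdot>)\<close> dual to the vertical lift \<open>\<zeta>\<close> of \<open>\<phi> u\<close>, the
  components \<open>d\<theta>(\<partial>\<^sub>u\<^sub>j, \<cdot>)\<close> vanish: this is where \<open>\<nabla>\<phi> = 0\<close> and the
  self-adjointness of \<open>\<phi>\<close> enter.\<close>
lemma lifted_covector_curl_mixed:
  assumes xU: "xpart z \<in> U"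
  shows "pd (\<lambda>w. lifted_covector g \<phi> w $ Inl q) (Inr j) z = pd (\<lambda>w. lifted_covector g \<phi> w $ Inr j) (Inl q) z"
proof -
  define x where "x = xpart z"
  define u where "u = upart z"
  define G where "G = g x"
  define P where "P = \<phi> x"
  define \<Gamma> where "\<Gamma> = (\<chi> l j. christoffel g x l q j)"
  define dg where "dg = (\<chi> j k. pd (\<lambda>y. g y $ j $ k) q x)"
  define dp where "dp = (\<chi> k m. pd (\<lambda>y. \<phi> y $ k $ m) q x)"
  have xU': "x \<in> U" using xU x_def by simp
  have GP: "(G ** P) $ a $ b = (G ** P) $ b $ a" for a b
    unfolding G_def P_def by (rule symmetric_matrix_nth[OF symmetric_g_mult_phi[OF xU']])
  have rhs: "pd (\<lambda>w. lifted_covector g \<phi> w $ Inr j) (Inl q) z = (dg *v (P *v u) + G *v (dp *v u)) $ j"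
    unfolding pd_lifted_covector_Inr_horizontal[OF smooth_g smooth_phi xU] x_def[symmetric] u_def[symmetric]
    by (simp add: dg_def dp_def G_def P_def matrix_vector_mult_def)
  have lhs: "pd (\<lambda>w. lifted_covector g \<phi> w $ Inl q) (Inr j) z
      = (transpose \<Gamma> *v (G *v (P *v u)) + (G ** P) *v (\<Gamma> *v u)) $ j"
  proof -
    have B: "nonlinear_connection g x (axis j 1) $ q $ k = christoffel g x k q j" for k
      by (simp add: nonlinear_connection_def sum_axis)
    have N: "nonlinear_connection g x u $ q $ k = (\<Gamma> *v u) $ k" for k
      by (simp add: nonlinear_connection_def \<Gamma>_def matrix_vector_mult_def mult.commute)
    have w': "phi_covector g \<phi> x (axis j 1) $ k = (G ** P) $ j $ k" for k
      using GP[of k j]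
      by (simp add: phi_covector_def G_def P_def matrix_vector_mult_def matrix_matrix_mult_def sum_axis sum_axis')
    have w: "phi_covector g \<phi> x u = G *v (P *v u)" by (simp add: phi_covector_def G_def P_def)
    have s1: "(nonlinear_connection g x (axis j 1) *v (G *v (P *v u))) $ q = (transpose \<Gamma> *v (G *v (P *v u))) $ j"
      by (simp add: matrix_vector_mult_def B \<Gamma>_def transpose_def)
    have s2: "(nonlinear_connection g x u *v phi_covector g \<phi> x (axis j 1)) $ q = ((G ** P) *v (\<Gamma> *v u)) $ j"
      unfolding matrix_vector_mult_def[of "nonlinear_connection g x u"] matrix_vector_mult_def[of "G ** P"]
      by (simp add: N w' mult.commute)
    show ?thesis
      unfolding pd_lifted_covector_vertical x_def[symmetric] u_def[symmetric] w
      by (simp add: s1 s2[unfolded w])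
  qed
  have "dg = G ** \<Gamma> + transpose \<Gamma> ** G"
    unfolding dg_def G_def \<Gamma>_def by (rule pd_metric_christoffel[OF xU'])
  moreover have "dp = P ** \<Gamma> - \<Gamma> ** P"
    unfolding dp_def P_def \<Gamma>_def by (rule pd_phi_commutator[OF xU'])
  ultimately show ?thesis unfolding lhs rhs by (simp add: lifted_covector_curl_algebra)
qed

lemma lifted_phi_contract_curl:
  assumes "xpart z \<in> U"
  shows "(\<Sum>a\<in>UNIV. lifted_phi \<phi> z $ a *
      (pd (\<lambda>w. lifted_covector g \<phi> w $ l) a z - pd (\<lambda>w. lifted_covector g \<phi> w $ a) l z)) = 0"
proof -
  have "pd (\<lambda>w. lifted_covector g \<phi> w $ l) (Inr j) z = pd (\<lambda>w. lifted_covector g \<phi> w $ Inr j) l z" for j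
  proof (cases l)
    case (Inl q) then show ?thesis using lifted_covector_curl_mixed[OF assms] by simp
  next
    case (Inr q) then show ?thesis
      using lifted_covector_curl_vertical[where g = g and \<phi> = \<phi>, OF symmetric_g_mult_phi[OF assms]] by simp
  qed
  then show ?thesis by (simp add: sum_UNIV_Plus lifted_phi_def)
qed

lemma tension_vertical_component:
  fixes \<delta> :: real and z :: "real^('n+'n)"
  defines "\<psi> \<equiv> \<phi> (xpart z) *v upart z"
  defines "w \<equiv> g (xpart z) *v \<psi>"
  defines "c \<equiv> \<delta>^2 / (1 + \<delta>^2 * (w \<bullet> \<psi>))"
  assumes xU: "xpart z \<in> U"
  shows "(\<Sum>a\<in>UNIV. \<Sum>b\<in>UNIV. matrix_inv (berger_metric g \<phi> \<delta> z)$a$b *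
            beta_comp (berger_metric g \<phi> \<delta>) (sasaki_metric g \<phi>) z (Inr m) a b)
     = c * \<psi>$m * (c * (w \<bullet> (\<phi> (xpart z) *v \<psi>)) - (\<Sum>j\<in>UNIV. \<phi> (xpart z) $ j $ j))"
proof -
  define G1 where "G1 = berger_metric g \<phi> \<delta>"
  define G2 where "G2 = sasaki_metric g \<phi>"
  define \<zeta> where "\<zeta> = lifted_phi \<phi> z"
  have G1_eq: "\<And>v. G1 v = G2 v + \<delta>^2 *\<^sub>R outer (G2 v *v lifted_phi \<phi> v) (G2 v *v lifted_phi \<phi> v)"
    by (simp add: G1_def G2_def sasaki_metric_mult_lifted_phi berger_metric_rank_one)
  have pd_G2: "pd_exists (\<lambda>v. G2 v $ b $ l) z a" for a b l
    using pd_exists_sasaki_horizontal[OF xU] pd_sasaki_metric_vertical(2) unfolding G2_def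
    by (cases a) auto
  have pd_\<zeta>: "pd_exists (\<lambda>v. lifted_phi \<phi> v $ l) z a" for a l
    using pd_exists_lifted_phi_horizontal[OF smooth_phi xU] pd_lifted_phi_vertical(2) by (cases a) auto
  have M1_eq: "matrix_inv (G1 z) = matrix_inv (G2 z) - c *\<^sub>R outer \<zeta> \<zeta>"
    using berger_metric_inverse(1)[OF xU] unfolding G1_def G2_def \<zeta>_def c_def w_def \<psi>_def .
  have M1_sym: "transpose (matrix_inv (G1 z)) = matrix_inv (G1 z)"
    unfolding G1_def by (rule berger_metric_inverse_symmetric[OF xU])
  have M1_\<theta>: "matrix_inv (G1 z) *v (G2 z *v lifted_phi \<phi> z)
      = (1 / (1 + \<delta>^2 * (w \<bullet> \<psi>))) *\<^sub>R lifted_phi \<phi> z"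
    unfolding G1_def G2_def sasaki_metric_mult_lifted_phi w_def \<psi>_def
    by (rule berger_metric_inverse_mult_lifted_covector[OF xU])
  have M2_eq: "matrix_inv (G2 z) = matrix_inv (G1 z) + c *\<^sub>R outer (lifted_phi \<phi> z) (lifted_phi \<phi> z)"
    using M1_eq unfolding \<zeta>_def by simp
  have "c = \<delta>^2 * (1 / (1 + \<delta>^2 * (w \<bullet> \<psi>)))" unfolding c_def by simp
  note tension = tension_rank_one_perturbation[where f = "lifted_phi \<phi>" and k = "Inr m",
      OF G1_eq pd_G2 pd_\<zeta> M1_sym M2_eq M1_\<theta> this, unfolded G1_def G2_def sasaki_metric_mult_lifted_phi]
  have Q: "(\<Sum>a\<in>UNIV. \<Sum>l\<in>UNIV. (matrix_inv (berger_metric g \<phi> \<delta> z) ** sasaki_metric g \<phi> z)$a$l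
        * pd (\<lambda>v. lifted_phi \<phi> v $ l) a z)
      = (\<Sum>j\<in>UNIV. \<phi> (xpart z) $ j $ j) - c * (w \<bullet> (\<phi> (xpart z) *v \<psi>))"
    unfolding berger_metric_inverse_mult_sasaki[OF xU] trace_pd_lifted_phi
    unfolding c_def w_def \<psi>_def ..
  have X: "(\<Sum>a\<in>UNIV. \<Sum>b\<in>UNIV. matrix_inv (berger_metric g \<phi> \<delta> z)$a$b
        * (\<Sum>l\<in>UNIV. lifted_phi \<phi> z$l * pd (\<lambda>v. sasaki_metric g \<phi> v $ a $ b) l z)) = 0"
    unfolding M1_eq[unfolded G1_def] G2_def sasaki_metric_inverse(1)[where g = g and \<phi> = \<phi> and z = z, OF invertible_g[OF xU]]
      \<zeta>_def
    by (rule trace_pd_sasaki_along_lifted_phi)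
  have E: "(\<Sum>a\<in>UNIV. lifted_phi \<phi> z $ a
        * (pd (\<lambda>v. lifted_covector g \<phi> v $ l) a z - pd (\<lambda>v. lifted_covector g \<phi> v $ a) l z)) = 0" for l
    by (rule lifted_phi_contract_curl[OF xU])
  have "lifted_phi \<phi> z $ Inr m = \<psi> $ m" by (simp add: \<psi>_def lifted_phi_def)
  with tension show ?thesis
    unfolding Q X E by (simp add: algebra_simps)
qed

lemma tension_eigenline:
  fixes \<delta> t :: real
  assumes xU: "x \<in> U" and eigen: "\<phi> x *v u = \<sigma> *\<^sub>R u" and \<sigma>: "\<sigma> * \<sigma> = 1"
  defines "q \<equiv> u \<bullet> (g x *v u)"
  defines "c \<equiv> \<delta>^2 / (1 + \<delta>^2 * (t^2 * q))"
  shows "(\<Sum>a\<in>UNIV. \<Sum>b\<in>UNIV. matrix_inv (berger_metric g \<phi> \<delta> (pair_vec x (t *\<^sub>R u)))$a$b *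
            beta_comp (berger_metric g \<phi> \<delta>) (sasaki_metric g \<phi>) (pair_vec x (t *\<^sub>R u)) (Inr m) a b)
     = c * (\<sigma> * t * u$m) * (\<sigma> * (c * (t^2 * q)) - (\<Sum>j\<in>UNIV. \<phi> x $ j $ j))"
proof -
  have \<psi>: "\<phi> x *v (t *\<^sub>R u) = (\<sigma> * t) *\<^sub>R u"
    using eigen by (simp add: matrix_vector_mult_scaleR)
  have \<phi>\<psi>: "\<phi> x *v ((\<sigma> * t) *\<^sub>R u) = t *\<^sub>R u"
  proof -
    have "\<phi> x *v ((\<sigma> * t) *\<^sub>R u) = ((\<sigma> * \<sigma>) * t) *\<^sub>R u"
      using eigen by (simp add: matrix_vector_mult_scaleR mult_ac)
    then show ?thesis using \<sigma> by simp
  qed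
  have w\<psi>: "(g x *v ((\<sigma> * t) *\<^sub>R u)) \<bullet> ((\<sigma> * t) *\<^sub>R u) = t^2 * q"
  proof -
    have "(g x *v ((\<sigma> * t) *\<^sub>R u)) \<bullet> ((\<sigma> * t) *\<^sub>R u) = ((\<sigma> * \<sigma>) * t^2) * q"
      by (simp add: q_def matrix_vector_mult_scaleR inner_commute power2_eq_square mult_ac)
    then show ?thesis using \<sigma> by simp
  qed
  have w\<phi>\<psi>: "(g x *v ((\<sigma> * t) *\<^sub>R u)) \<bullet> (t *\<^sub>R u) = \<sigma> * (t^2 * q)"
    by (simp add: q_def matrix_vector_mult_scaleR inner_commute power2_eq_square mult_ac)
  show ?thesis
    using tension_vertical_component[of "pair_vec x (t *\<^sub>R u)" \<delta> m,
        unfolded xpart_pair_vec upart_pair_vec \<psi> \<phi>\<psi> w\<psi> w\<phi>\<psi>, OF xU]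
    unfolding c_def by (simp add: mult_ac)
qed

lemma not_harmonic_berger_sasaki:
  fixes \<delta> :: real
  assumes xU: "x \<in> U" and "u \<noteq> 0" and eigen: "\<phi> x *v u = \<sigma> *\<^sub>R u" and \<sigma>: "\<sigma> * \<sigma> = 1"
    and "\<delta> \<noteq> 0"
  shows "\<not> harmonic_id (TM_dom U) (berger_metric g \<phi> \<delta>) (sasaki_metric g \<phi>)"
proof
  assume harmonic: "harmonic_id (TM_dom U) (berger_metric g \<phi> \<delta>) (sasaki_metric g \<phi>)"
  obtain m where m: "u $ m \<noteq> 0" using \<open>u \<noteq> 0\<close> by (metis vec_eq_iff zero_index)
  define q where "q = u \<bullet> (g x *v u)"
  have "q > 0" using positive_g xU \<open>u \<noteq> 0\<close> by (simp add: q_def gform_def)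
  define h where "h t = \<delta>^2 * (t^2 * q) / (1 + \<delta>^2 * (t^2 * q))" for t :: real
  have "\<sigma> * h t = (\<Sum>j\<in>UNIV. \<phi> x $ j $ j)" if "t \<noteq> 0" for t
  proof -
    have "pair_vec x (t *\<^sub>R u) \<in> TM_dom U" by (simp add: TM_dom_def xpart_pair_vec xU)
    then have "(\<delta>^2 / (1 + \<delta>^2 * (t^2 * q))) * (\<sigma> * t * u$m)
        * (\<sigma> * ((\<delta>^2 / (1 + \<delta>^2 * (t^2 * q))) * (t^2 * q)) - (\<Sum>j\<in>UNIV. \<phi> x $ j $ j)) = 0"
      using harmonic tension_eigenline[OF xU eigen \<sigma>, of \<delta> t m]
      unfolding harmonic_id_def q_def by simp
    moreover have "1 + \<delta>^2 * (t^2 * q) > 0"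
      using \<open>q > 0\<close> by (intro add_pos_nonneg) auto
    then have "(\<delta>^2 / (1 + \<delta>^2 * (t^2 * q))) * (\<sigma> * t * u$m) \<noteq> 0"
      using \<open>\<delta> \<noteq> 0\<close> that m \<sigma> by auto
    ultimately show ?thesis by (simp add: h_def)
  qed
  then have "h 1 = h 2" using \<sigma> by (metis mult_cancel_left mult_zero_left zero_neq_numeral one_neq_zero)
  moreover have "h 1 \<noteq> h 2"
  proof -
    define p where "p = \<delta>^2 * q"
    have "p > 0" using \<open>q > 0\<close> \<open>\<delta> \<noteq> 0\<close> by (simp add: p_def)
    then have "p / (1 + p) \<noteq> 4 * p / (1 + 4 * p)" by (simp add: field_simps)
    moreover have "h 1 = p / (1 + p)" "h 2 = 4 * p / (1 + 4 * p)"
      by (simp_all add: h_def p_def algebra_simps)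
    ultimately show ?thesis by simp
  qed
  ultimately show False by simp
qed

end

lemma totally_geodesic_id_imp_harmonic_id:
  "totally_geodesic_id D G1 G2 \<Longrightarrow> harmonic_id D G1 G2"
  unfolding totally_geodesic_id_def harmonic_id_def by simp

lemma involution_eigenvector:
  fixes P :: "real^'n^'n"
  assumes "P ** P = mat 1"
  obtains u \<sigma> where "u \<noteq> 0" "P *v u = \<sigma> *\<^sub>R u" "\<sigma> * \<sigma> = 1"
proof -
  obtain i :: 'n where True by blast
  define a where "a = (axis i 1 :: real^'n)"
  have "a \<noteq> 0" by (simp add: a_def)
  have PP: "P *v (P *v v) = v" for v using assms by (simp add: matrix_vector_mul_assoc)
  show ?thesis
  proof (cases "a + P *v a = 0")
    case True
    then have "P *v a = (-1) *\<^sub>R a" by (simp add: add_eq_0_iff)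
    then show ?thesis using that \<open>a \<noteq> 0\<close> by fastforce
  next
    case False
    have "P *v (a + P *v a) = 1 *\<^sub>R (a + P *v a)"
      by (simp add: matrix_vector_right_distrib PP add.commute)
    then show ?thesis using that False by fastforce
  qed
qed

theorem mainTheorem8:
  fixes U :: "(real^'n) set" and g \<phi> :: "real^'n \<Rightarrow> real^'n^'n" and k :: nat and \<delta> :: real
  assumes "open U" and "U \<noteq> {}"
    and "CARD('n) = 2 * k" and "k \<ge> 1"
    and "\<forall>i j. smooth_on U (\<lambda>x. g x $ i $ j)"
    and "\<forall>i j. smooth_on U (\<lambda>x. \<phi> x $ i $ j)"
    and "\<forall>x\<in>U. transpose (g x) = g x"
    and "\<forall>x\<in>U. \<forall>v. v \<noteq> 0 \<longrightarrow> gform g x v v > 0"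
    and "\<forall>x\<in>U. \<phi> x ** \<phi> x = mat 1"
    and "\<forall>x\<in>U. dim {v. \<phi> x *v v = v} = k \<and> dim {v. \<phi> x *v v = - v} = k"
    and "\<forall>x\<in>U. \<forall>v w. gform g x (\<phi> x *v v) w = gform g x v (\<phi> x *v w)"
    and "\<forall>x\<in>U. \<forall>a i j. nabla_phi g \<phi> x a i j = 0"
    and "\<delta> \<noteq> 0"
  shows "\<not> totally_geodesic_id (TM_dom U) (berger_metric g \<phi> \<delta>) (sasaki_metric g \<phi>)
       \<and> \<not> harmonic_id (TM_dom U) (berger_metric g \<phi> \<delta>) (sasaki_metric g \<phi>)"
proof -
  interpret parallel_selfadjoint_chart U g \<phi>
    using assms by unfold_locales
  obtain x where "x \<in> U" using assms(2) by blast
  moreover obtain u \<sigma> where "u \<noteq> 0" "\<phi> x *v u = \<sigma> *\<^sub>R u" "\<sigma> * \<sigma> = 1"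
    using involution_eigenvector assms(9) \<open>x \<in> U\<close> by metis
  ultimately have "\<not> harmonic_id (TM_dom U) (berger_metric g \<phi> \<delta>) (sasaki_metric g \<phi>)"
    using not_harmonic_berger_sasaki assms(13) by blast
  then show ?thesis using totally_geodesic_id_imp_harmonic_id by blast
qed

end
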